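(* Suppose $c,\rho>0$ satisfy the parameter condition (C), the graph $G$ is connected, and $\mathcal A\neq\emptyset$. Then the sequences $\{\mathbf z^t\}_{t\ge1}$, $\{\mathbf w^t\}_{t\ge1}$, $\{\boldsymbol\lambda^t\}_{t\ge1}$ and $\{\tilde{\mathbf z}^t\}_{t\ge1}$ generated by Algorithm SP-ADMM-JCNL are bounded.
   Context: $G=(\mathcal N,\mathcal E)$ is an undirected graph on $\mathcal N=\{1,\dots,N\}$, $\mathcal N_i=\{j:(i,j)\in\mathcal E\}$, $N_i=|\mathcal N_i|\ge1$ (neighbors listed in a fixed order). $\mathcal A\subseteq\mathcal N$ is the set of anchors with known positions $\mathbf a_k\in\mathbb R^n$. Measurements $d_{i,j}=d_{j,i}\ge0$ ($j\in\mathcal N_i$) and $r_i\ge0$. $\mathcal B^{k}$ is the product of $k$ closed Euclidean unit balls of $\mathbb R^n$; $\delta_C$ is the indicator function of $C$. Variables: $\mathbf z_i=(\mathbf x_i,\mathbf p_i^-,\mathbf p_i^+,\mathbf y_i,\mathbf q_i^-,\mathbf q_i^+)\in\mathbb R^{(4N_i+2)n}$ with $\mathbf p_i^\pm=(\mathbf p^\pm_{i,j})_{j\in\mathcal N_i}$, $\mathbf q_i^\pm=(\mathbf q^\pm_{i,j})_{j\in\mathcal N_i}$ (blocks in $\mathbb R^n$), $\mathbf z=(\mathbf z_i)_i$; $\mathbf w_i=((\mathbf v_{i,j})_{j\in\mathcal N_i},\mathbf u_i)\in\mathbb R^{(N_i+1)n}$, $\mathbf w=(\mathbf w_i)_i$;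 $\boldsymbol\lambda_i\in\mathbb R^{3N_in}$. Linear maps (identified with their matrices): $\mathbf H_i\mathbf z_i=((\mathbf x_i-\mathbf p^+_{i,j})_{j},\mathbf x_i-\mathbf y_i)$, $\mathbf A_i\mathbf z_i=((\mathbf x_i-\mathbf p^-_{i,j})_j,(\mathbf y_i-\mathbf q^-_{i,j})_j,(\mathbf y_i-\mathbf q^+_{i,j})_j)$, $\mathbf D_i=\mathrm{Diag}((d_{i,j})_{j\in\mathcal N_i},r_i)\otimes\mathbf I_n$. $G_i(\mathbf z_i,\mathbf w_i)=\frac12\|\mathbf H_i\mathbf z_i\|^2-\mathbf w_i^T\mathbf D_i\mathbf H_i\mathbf z_i$. $\mathcal X=\{\mathbf z:\mathbf x_i=\mathbf a_i\ \forall i\in\mathcal A\}$, $\mathcal Y=\{\mathbf z:\mathbf p^+_{i,j}=\mathbf p^-_{j,i},\ \mathbf q^+_{i,j}=\mathbf q^-_{j,i}\ \forall i,\ j\in\mathcal N_i\}$. $|\mathbf M|$ is the entrywise absolute value, $\|\mathbf v\|^2_{\mathbf M}=\mathbf v^T\mathbf M\mathbf v$, $\mathbf S_i=|\mathbf A_i^T\mathbf A_i|+\frac1c|\mathbf H_i^T\mathbf H_i|$, $\mathbf U_i=\mathbf H_i^T\mathbf H_i+c\mathbf A_i^T\mathbf A_i+c\mathbf S_i$ (a positive definite diagonal matrix). Augmented Lagrangian: $\mathcal L_i(\mathbf z_i,\mathbf w_i,\boldsymbol\lambda_i)=G_i(\mathbf z_i,\mathbf w_i)+\delta_{\mathcal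 B^{N_i+1}}(\mathbf w_i)+\langle\boldsymbol\lambda_i,\mathbf A_i\mathbf z_i\rangle+\frac c2\|\mathbf A_i\mathbf z_i\|^2$. Algorithm SP-ADMM-JCNL (parameters $c,\rho>0$; arbitrary $\mathbf z^0,\mathbf w^0$, $\boldsymbol\lambda^0=\mathbf 0$): for $t\ge0$, $\mathbf z^{t+1}=\arg\min_{\mathbf z\in\mathcal X\cap\mathcal Y}\sum_i[\mathcal L_i(\mathbf z_i,\mathbf w_i^t,\boldsymbol\lambda_i^t)+\frac c2\|\mathbf z_i-\mathbf z_i^t\|^2_{\mathbf S_i}]$; $\mathbf w_i^{t+1}=\mathrm{proj}_{\mathcal B^{N_i+1}}(\mathbf w_i^t+\rho^{-1}\mathbf D_i\mathbf H_i\mathbf z_i^{t+1})$; $\boldsymbol\lambda_i^{t+1}=\boldsymbol\lambda_i^t+c\mathbf A_i\mathbf z_i^{t+1}$. Auxiliary sequence: $\tilde{\mathbf z}_i^{t+1}=\mathbf U_i^{-1}(\mathbf H_i^T\mathbf D_i\mathbf w_i^t-\mathbf A_i^T\boldsymbol\lambda_i^t+c\mathbf S_i\mathbf z_i^t)$ for $t\ge0$, $\tilde{\mathbf z}^t=(\tilde{\mathbf z}_i^t)_i$. Constants: $N_{\max}=\max_iN_i$, $N_{\mathrm{sum}}=\sum_iN_i$, $d_{\max}=\max(\{d_{i,j}\}\cup\{r_i\})$, $\tilde\tau_{\min}=\min_{i\in\mathcal N}\{5(c+1)^2N_i^2+(3c^2+4c+3)N_i\}$. Parameter condition (C): there exist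 $\kappa_1,\kappa_2>0$ with $\kappa_1\ge6(2N_{\max}+2)(1+\frac1c)$, $\kappa_2\ge\frac{3N_{\mathrm{sum}}n(c+1)^2(2N_{\max}+1)\kappa_1}{\tilde\tau_{\min}}$, and $\rho\ge4d_{\max}^2(\kappa_1+\kappa_2)$. *)

theory Defs
  imports "HOL-Analysis.Analysis"
begin

text \<open>Nodes are 1..N; E is the (symmetric, irreflexive) edge relation.
  Positions/blocks live in real^'n, so n = CARD('n).
  Local variables are indexed by "slots":
  z_i = (x_i, p^-_i, p^+_i, y_i, q^-_i, q^+_i), with p/q blocks indexed by neighbours j.\<close>

datatype slot = SX | SPm nat | SPp nat | SY | SQm nat | SQp nat
datatype hrow = HV nat | HU          \<comment> \<open>rows of H_i, also indices of w_i = ((v_ij)_j, u_i)\<close>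
datatype arow = AP nat | AQm nat | AQp nat   \<comment> \<open>rows of A_i, also indices of lambda_i\<close>

definition nodes :: "nat \<Rightarrow> nat set" where "nodes N = {1..N}"

definition nbrs :: "(nat \<Rightarrow> nat \<Rightarrow> bool) \<Rightarrow> nat \<Rightarrow> nat \<Rightarrow> nat set" where
  "nbrs E N i = {j \<in> nodes N. E i j}"

definition deg :: "(nat \<Rightarrow> nat \<Rightarrow> bool) \<Rightarrow> nat \<Rightarrow> nat \<Rightarrow> nat" where
  "deg E N i = card (nbrs E N i)"

definition slots :: "(nat \<Rightarrow> nat \<Rightarrow> bool) \<Rightarrow> nat \<Rightarrow> nat \<Rightarrow> slot set" where
  "slots E N i = {SX, SY} \<union> SPm ` nbrs E N i \<union> SPp ` nbrs E N i
                 \<union> SQm ` nbrs E N i \<union> SQp ` nbrs E N i"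

definition hrows :: "(nat \<Rightarrow> nat \<Rightarrow> bool) \<Rightarrow> nat \<Rightarrow> nat \<Rightarrow> hrow set" where
  "hrows E N i = HV ` nbrs E N i \<union> {HU}"

definition arows :: "(nat \<Rightarrow> nat \<Rightarrow> bool) \<Rightarrow> nat \<Rightarrow> nat \<Rightarrow> arow set" where
  "arows E N i = AP ` nbrs E N i \<union> AQm ` nbrs E N i \<union> AQp ` nbrs E N i"

text \<open>Scalar coefficient matrices of H_i and A_i (the actual maps are these Kronecker I_n).\<close>
fun Hmat :: "hrow \<Rightarrow> slot \<Rightarrow> real" where
  "Hmat (HV j) s = (if s = SX then 1 else if s = SPp j then -1 else 0)"
| "Hmat HU s = (if s = SX then 1 else if s = SY then -1 else 0)"

fun Amat :: "arow \<Rightarrow> slot \<Rightarrow> real" where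
  "Amat (AP j) s = (if s = SX then 1 else if s = SPm j then -1 else 0)"
| "Amat (AQm j) s = (if s = SY then 1 else if s = SQm j then -1 else 0)"
| "Amat (AQp j) s = (if s = SY then 1 else if s = SQp j then -1 else 0)"

definition mv :: "('r \<Rightarrow> 's \<Rightarrow> real) \<Rightarrow> 's set \<Rightarrow> ('s \<Rightarrow> real^'n) \<Rightarrow> 'r \<Rightarrow> real^'n" where
  "mv M C v = (\<lambda>r. \<Sum>s\<in>C. M r s *\<^sub>R v s)"

definition mtv :: "('r \<Rightarrow> 's \<Rightarrow> real) \<Rightarrow> 'r set \<Rightarrow> ('r \<Rightarrow> real^'n) \<Rightarrow> 's \<Rightarrow> real^'n" where
  "mtv M R v = (\<lambda>s. \<Sum>r\<in>R. M r s *\<^sub>R v r)"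

definition gram :: "('r \<Rightarrow> 's \<Rightarrow> real) \<Rightarrow> 'r set \<Rightarrow> 's \<Rightarrow> 's \<Rightarrow> real" where
  "gram M R = (\<lambda>s s'. \<Sum>r\<in>R. M r s * M r s')"

definition absm :: "('s \<Rightarrow> 's \<Rightarrow> real) \<Rightarrow> 's \<Rightarrow> 's \<Rightarrow> real" where
  "absm K = (\<lambda>s s'. \<bar>K s s'\<bar>)"

definition qf :: "('s \<Rightarrow> 's \<Rightarrow> real) \<Rightarrow> 's set \<Rightarrow> ('s \<Rightarrow> real^'n) \<Rightarrow> real" where
  "qf K C v = (\<Sum>s\<in>C. \<Sum>s'\<in>C. K s s' * (v s \<bullet> v s'))"

definition mapply :: "('s \<Rightarrow> 's \<Rightarrow> real) \<Rightarrow> 's set \<Rightarrow> ('s \<Rightarrow> real^'n) \<Rightarrow> 's \<Rightarrow> real^'n" where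
  "mapply K C v = (\<lambda>s. \<Sum>s'\<in>C. K s s' *\<^sub>R v s')"

definition Smat :: "real \<Rightarrow> (nat \<Rightarrow> nat \<Rightarrow> bool) \<Rightarrow> nat \<Rightarrow> nat \<Rightarrow> slot \<Rightarrow> slot \<Rightarrow> real" where
  "Smat c E N i = (\<lambda>s s'. absm (gram Amat (arows E N i)) s s'
                          + (1 / c) * absm (gram Hmat (hrows E N i)) s s')"

definition Umat :: "real \<Rightarrow> (nat \<Rightarrow> nat \<Rightarrow> bool) \<Rightarrow> nat \<Rightarrow> nat \<Rightarrow> slot \<Rightarrow> slot \<Rightarrow> real" where
  "Umat c E N i = (\<lambda>s s'. gram Hmat (hrows E N i) s s' + c * gram Amat (arows E N i) s s'
                          + c * Smat c E N i s s')"

text \<open>D_i = Diag((d_ij)_j, r_i) \<otimes> I_n, as a diagonal weight on rows of H_i.\<close>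
fun Dw :: "(nat \<Rightarrow> nat \<Rightarrow> real) \<Rightarrow> (nat \<Rightarrow> real) \<Rightarrow> nat \<Rightarrow> hrow \<Rightarrow> real" where
  "Dw d r i (HV j) = d i j"
| "Dw d r i HU = r i"

definition Gi :: "(nat \<Rightarrow> nat \<Rightarrow> bool) \<Rightarrow> nat \<Rightarrow> (nat \<Rightarrow> nat \<Rightarrow> real) \<Rightarrow> (nat \<Rightarrow> real) \<Rightarrow> nat
     \<Rightarrow> (slot \<Rightarrow> real^'n) \<Rightarrow> (hrow \<Rightarrow> real^'n) \<Rightarrow> real" where
  "Gi E N d r i zi wi =
     (1/2) * (\<Sum>h\<in>hrows E N i. (norm (mv Hmat (slots E N i) zi h))\<^sup>2)
     - (\<Sum>h\<in>hrows E N i. Dw d r i h * (wi h \<bullet> mv Hmat (slots E N i) zi h))"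

text \<open>Objective of the z-update (the constant term delta_B(w_i^t) is omitted).\<close>
definition zobj :: "real \<Rightarrow> (nat \<Rightarrow> nat \<Rightarrow> bool) \<Rightarrow> nat \<Rightarrow> (nat \<Rightarrow> nat \<Rightarrow> real) \<Rightarrow> (nat \<Rightarrow> real)
     \<Rightarrow> (nat \<Rightarrow> hrow \<Rightarrow> real^'n) \<Rightarrow> (nat \<Rightarrow> arow \<Rightarrow> real^'n) \<Rightarrow> (nat \<Rightarrow> slot \<Rightarrow> real^'n)
     \<Rightarrow> (nat \<Rightarrow> slot \<Rightarrow> real^'n) \<Rightarrow> real" where
  "zobj c E N d r w lam zt z =
     (\<Sum>i\<in>nodes N.
        Gi E N d r i (z i) (w i)
        + (\<Sum>a\<in>arows E N i. lam i a \<bullet> mv Amat (slots E N i) (z i) a)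
        + (c/2) * (\<Sum>a\<in>arows E N i. (norm (mv Amat (slots E N i) (z i) a))\<^sup>2)
        + (c/2) * qf (Smat c E N i) (slots E N i) (\<lambda>s. z i s - zt i s))"

definition feasXY :: "(nat \<Rightarrow> nat \<Rightarrow> bool) \<Rightarrow> nat \<Rightarrow> nat set \<Rightarrow> (nat \<Rightarrow> real^'n)
     \<Rightarrow> (nat \<Rightarrow> slot \<Rightarrow> real^'n) \<Rightarrow> bool" where
  "feasXY E N anc apos z \<longleftrightarrow>
     (\<forall>i\<in>anc. z i SX = apos i) \<and>
     (\<forall>i\<in>nodes N. \<forall>j\<in>nbrs E N i. z i (SPp j) = z j (SPm i) \<and> z i (SQp j) = z j (SQm i))"

text \<open>Sequences generated by SP-ADMM-JCNL (z, w, lam indexed by time, node, block),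
  together with the auxiliary sequence ztil (defined for t \<ge> 1 by U_i ztil_i^{t+1} = ...,
  i.e. ztil_i^{t+1} = U_i^{-1}(...)).\<close>
definition sp_admm_jcnl ::
  "real \<Rightarrow> real \<Rightarrow> (nat \<Rightarrow> nat \<Rightarrow> bool) \<Rightarrow> nat \<Rightarrow> nat set \<Rightarrow> (nat \<Rightarrow> real^'n)
   \<Rightarrow> (nat \<Rightarrow> nat \<Rightarrow> real) \<Rightarrow> (nat \<Rightarrow> real)
   \<Rightarrow> (nat \<Rightarrow> nat \<Rightarrow> slot \<Rightarrow> real^'n) \<Rightarrow> (nat \<Rightarrow> nat \<Rightarrow> hrow \<Rightarrow> real^'n)
   \<Rightarrow> (nat \<Rightarrow> nat \<Rightarrow> arow \<Rightarrow> real^'n) \<Rightarrow> (nat \<Rightarrow> nat \<Rightarrow> slot \<Rightarrow> real^'n) \<Rightarrow> bool" where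
  "sp_admm_jcnl c \<rho> E N anc apos d r z w lam ztil \<longleftrightarrow>
     (\<forall>i\<in>nodes N. \<forall>a\<in>arows E N i. lam 0 i a = 0) \<and>
     (\<forall>t. feasXY E N anc apos (z (Suc t)) \<and>
          (\<forall>z'. feasXY E N anc apos z' \<longrightarrow>
               zobj c E N d r (w t) (lam t) (z t) (z (Suc t)) \<le> zobj c E N d r (w t) (lam t) (z t) z')) \<and>
     (\<forall>t. \<forall>i\<in>nodes N. \<forall>h\<in>hrows E N i.
          w (Suc t) i h = closest_point (cball 0 1)
                 (w t i h + (1/\<rho>) *\<^sub>R (Dw d r i h *\<^sub>R mv Hmat (slots E N i) (z (Suc t) i) h))) \<and>
     (\<forall>t. \<forall>i\<in>nodes N. \<forall>a\<in>arows E N i.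
          lam (Suc t) i a = lam t i a + c *\<^sub>R mv Amat (slots E N i) (z (Suc t) i) a) \<and>
     (\<forall>t. \<forall>i\<in>nodes N. \<forall>s\<in>slots E N i.
          mapply (Umat c E N i) (slots E N i) (ztil (Suc t) i) s
          = mtv Hmat (hrows E N i) (\<lambda>h. Dw d r i h *\<^sub>R w t i h) s
            - mtv Amat (arows E N i) (lam t i) s
            + c *\<^sub>R mapply (Smat c E N i) (slots E N i) (z t i) s)"

definition param_cond :: "real \<Rightarrow> real \<Rightarrow> nat \<Rightarrow> (nat \<Rightarrow> nat \<Rightarrow> bool) \<Rightarrow> nat
     \<Rightarrow> (nat \<Rightarrow> nat \<Rightarrow> real) \<Rightarrow> (nat \<Rightarrow> real) \<Rightarrow> bool" where
  "param_cond c \<rho> n E N d r \<longleftrightarrow>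
     (let Nmax = Max (deg E N ` nodes N);
          Nsum = (\<Sum>i\<in>nodes N. deg E N i);
          dmax = Max ({d i j | i j. i \<in> nodes N \<and> j \<in> nbrs E N i} \<union> r ` nodes N);
          taumin = Min ((\<lambda>i. 5 * (c+1)\<^sup>2 * (real (deg E N i))\<^sup>2
                              + (3*c\<^sup>2 + 4*c + 3) * real (deg E N i)) ` nodes N)
      in \<exists>\<kappa>1 \<kappa>2. \<kappa>1 > 0 \<and> \<kappa>2 > 0 \<and>
           \<kappa>1 \<ge> 6 * (2 * real Nmax + 2) * (1 + 1/c) \<and>
           \<kappa>2 \<ge> 3 * real Nsum * real n * (c+1)\<^sup>2 * (2 * real Nmax + 1) * \<kappa>1 / taumin \<and>
           \<rho> \<ge> 4 * dmax\<^sup>2 * (\<kappa>1 + \<kappa>2))"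

definition bounded_seq :: "nat \<Rightarrow> (nat \<Rightarrow> 'b set) \<Rightarrow> (nat \<Rightarrow> nat \<Rightarrow> 'b \<Rightarrow> real^'n) \<Rightarrow> bool" where
  "bounded_seq N idx f \<longleftrightarrow> (\<exists>B. \<forall>t\<ge>1. \<forall>i\<in>nodes N. \<forall>k\<in>idx i. norm (f t i k) \<le> B)"

end

theory Submission
  imports Defs
begin

text \<open>Let \<open>z\<^sub>r\<^sub>e\<^sub>f\<close> be the point of \<open>X \<inter> Y\<close> carrying the anchor positions in its \<open>x\<close>- and
  \<open>p\<close>-blocks and zero elsewhere, so that \<open>A z\<^sub>r\<^sub>e\<^sub>f = 0\<close>, and measure the iterates by
  \<open>z\<^sub>d\<^sub>e\<^sub>v = z - z\<^sub>r\<^sub>e\<^sub>f\<close>. Optimality of \<open>z\<^sup>t\<^sup>+\<^sup>1\<close> along the linear space parallel to \<open>X \<inter> Y\<close>,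
  tested with \<open>z\<^sub>d\<^sub>e\<^sub>v\<^sup>t\<^sup>+\<^sup>1\<close>, gives a perturbed Fejer inequality
  \<open>V\<^sub>t\<^sub>+\<^sub>1 \<le> V\<^sub>t - min 1 c \<cdot> e\<^sub>t\<^sub>+\<^sub>1\<^sup>2 + \<beta>\<close> for
  \<open>V\<^sub>t = c \<Sum>\<^sub>i \<parallel>z\<^sub>d\<^sub>e\<^sub>v\<^sub>,\<^sub>i\<^sup>t\<parallel>\<^sup>2\<^sub>S\<^sub>i + \<parallel>\<lambda>\<^sup>t\<parallel>\<^sup>2 / c\<close>, where
  \<open>e\<^sub>t\<^sup>2 = \<parallel>H z\<^sub>d\<^sub>e\<^sub>v\<^sup>t\<parallel>\<^sup>2 + \<parallel>A z\<^sub>d\<^sub>e\<^sub>v\<^sup>t\<parallel>\<^sup>2\<close> and \<open>\<beta>\<close> is finite because every \<open>w\<^sup>t\<close> lies in the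
  unit ball. Conversely \<open>V\<close> is controlled by the residuals \<open>e\<close>: on the parallel space \<open>H v\<close> and
  \<open>A v\<close> bound \<open>v\<close> itself (propagate along paths from an anchor, where \<open>x\<close> vanishes), and
  \<open>\<lambda>\<^sup>t = A \<zeta>\<^sup>t\<close> for some \<open>\<zeta>\<^sup>t\<close> in that space, so testing optimality with a suitable lift of
  \<open>\<lambda>\<^sup>t\<^sup>+\<^sup>1\<close> bounds \<open>\<parallel>\<lambda>\<^sup>t\<^sup>+\<^sup>1\<parallel>\<close> linearly in \<open>e\<^sub>t\<close> and \<open>e\<^sub>t\<^sub>+\<^sub>1\<close>. Hence
  \<open>V\<^sub>t\<^sub>+\<^sub>1 \<le> P (e\<^sub>t\<^sub>+\<^sub>1\<^sup>2 + e\<^sub>t\<^sup>2 + 1)\<close>, and two consecutive descent steps give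
  \<open>(1 + min 1 c / P) V\<^sub>t\<^sub>+\<^sub>2 \<le> V\<^sub>t + const\<close>, so \<open>V\<close> is bounded. This bounds \<open>\<lambda>\<close>, \<open>e\<close> and
  \<open>z\<close>; \<open>z\<^sup>~\<close> follows because \<open>U\<^sub>i\<close> is diagonal with entries at least \<open>2 min 1 c\<close>, and \<open>w\<close> is
  bounded by construction.\<close>

lemma sum_pm_indicator_scaleR:
  fixes f :: "'s \<Rightarrow> 'v::real_vector"
  assumes "finite C" "a \<in> C" "b \<in> C" "a \<noteq> b"
  shows "(\<Sum>s\<in>C. (if s = a then 1 else if s = b then -1 else 0) *\<^sub>R f s) = f a - f b"
proof -
  have "(\<lambda>s. (if s = a then 1 else if s = b then -1 else 0) *\<^sub>R f s)
      = (\<lambda>s. (if s = a then f a else 0) + (if s = b then - f b else 0))"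
    using assms(4) by (auto simp: fun_eq_iff)
  then show ?thesis using assms by (simp only:) (simp add: sum.distrib)
qed

lemma power2_norm_add_scaleR:
  fixes a b :: "'a::real_inner"
  shows "(norm (a + x *\<^sub>R b))\<^sup>2 = (norm a)\<^sup>2 + 2 * x * (a \<bullet> b) + x\<^sup>2 * (norm b)\<^sup>2"
  unfolding power2_norm_eq_inner by (simp add: inner_add inner_commute power2_eq_square algebra_simps)

lemma sum_power2_norm_add_scaleR:
  fixes f g :: "'h \<Rightarrow> 'a::real_inner"
  shows "(\<Sum>h\<in>R. (norm (f h + x *\<^sub>R g h))\<^sup>2)
    = (\<Sum>h\<in>R. (norm (f h))\<^sup>2) + 2 * x * (\<Sum>h\<in>R. f h \<bullet> g h) + x\<^sup>2 * (\<Sum>h\<in>R. (norm (g h))\<^sup>2)"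
  by (simp add: power2_norm_add_scaleR sum.distrib sum_distrib_left)

lemma sum_weighted_inner_add_scaleR:
  fixes f g p :: "'h \<Rightarrow> 'a::real_inner"
  shows "(\<Sum>h\<in>R. u h * (p h \<bullet> (f h + x *\<^sub>R g h)))
    = (\<Sum>h\<in>R. u h * (p h \<bullet> f h)) + x * (\<Sum>h\<in>R. u h * (p h \<bullet> g h))"
  by (simp add: inner_add_right sum.distrib sum_distrib_left algebra_simps)

lemma sum_inner_add_scaleR:
  fixes f g p :: "'h \<Rightarrow> 'a::real_inner"
  shows "(\<Sum>h\<in>R. p h \<bullet> (f h + x *\<^sub>R g h)) = (\<Sum>h\<in>R. p h \<bullet> f h) + x * (\<Sum>h\<in>R. p h \<bullet> g h)"
  by (simp add: inner_add_right sum.distrib sum_distrib_left algebra_simps)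

lemma two_inner_le_sum_power2_norm:
  fixes a b :: "'a::real_inner"
  shows "2 * (a \<bullet> b) \<le> (norm a)\<^sup>2 + (norm b)\<^sup>2"
proof -
  have "0 \<le> (norm (a - b))\<^sup>2" by simp
  also have "\<dots> = (norm a)\<^sup>2 - 2 * (a \<bullet> b) + (norm b)\<^sup>2"
    unfolding power2_norm_eq_inner by (simp add: inner_diff inner_commute)
  finally show ?thesis by simp
qed

lemma norm_diff_add_le:
  fixes x y z :: "'a::real_normed_vector"
  shows "norm (x - y + z) \<le> norm x + norm y + norm z"
  using norm_triangle_ineq[of "x - y" z] norm_triangle_ineq4[of x y] by linarith

lemma norm_add_diff_le:
  fixes x y z :: "'a::real_normed_vector"
  shows "norm (x + y - z) \<le> norm x + norm y + norm z"
  using norm_triangle_ineq4[of "x + y" z] norm_triangle_ineq[of x y] by linarith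

lemma power2_sum3_le:
  fixes a b c :: real
  shows "(a + b + c)\<^sup>2 \<le> 3 * (a\<^sup>2 + b\<^sup>2 + c\<^sup>2)"
proof -
  have "0 \<le> (a - b)\<^sup>2 + (b - c)\<^sup>2 + (a - c)\<^sup>2" by simp
  then show ?thesis by (simp add: power2_eq_square algebra_simps)
qed

lemma linear_coeff_zero_if_quadratic_nonneg:
  fixes a b :: real
  assumes "\<And>x. 0 \<le> x * a + x\<^sup>2 * b"
  shows "a = 0"
proof -
  have "a * a \<le> 0"
  proof (cases "b \<le> 0")
    case True
    have "0 \<le> (-a) * a + (-a)\<^sup>2 * b" by (rule assms)
    moreover have "(-a)\<^sup>2 * b \<le> 0" using True by (simp add: mult_nonneg_nonpos)
    ultimately show ?thesis by simp
  next
    case False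
    define x where "x = -a/(2*b)"
    have "0 \<le> x * a + x\<^sup>2 * b" by (rule assms)
    also have "x * a + x\<^sup>2 * b = - (a * a / (4*b))"
      unfolding x_def power2_eq_square using False by (simp add: field_simps)
    finally show ?thesis using False by (simp add: divide_le_0_iff)
  qed
  then show ?thesis by (auto simp: mult_le_0_iff)
qed

lemma sqrt_le_if_le_mult_sqrt:
  assumes "0 \<le> L" "0 \<le> X" "L \<le> X * sqrt L"
  shows "sqrt L \<le> X"
proof (cases "L = 0")
  case True then show ?thesis using assms by simp
next
  case False
  then have p: "sqrt L > 0" using assms by simp
  have "sqrt L * sqrt L \<le> X * sqrt L" using assms by simp
  then show ?thesis unfolding mult_le_cancel_right_pos[OF p] .
qed

lemma member_le_double_sum:
  fixes f :: "'i \<Rightarrow> 'h \<Rightarrow> real"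
  assumes "finite I" "\<And>i. finite (R i)" "i \<in> I" "h \<in> R i" "\<And>i h. 0 \<le> f i h"
  shows "f i h \<le> (\<Sum>i\<in>I. \<Sum>h\<in>R i. f i h)"
proof -
  have "f i h \<le> (\<Sum>h\<in>R i. f i h)" by (rule member_le_sum) (use assms in auto)
  also have "\<dots> \<le> (\<Sum>i\<in>I. \<Sum>h\<in>R i. f i h)"
    by (rule member_le_sum[where f = "\<lambda>i. \<Sum>h\<in>R i. f i h"]) (use assms in \<open>auto intro: sum_nonneg\<close>)
  finally show ?thesis .
qed

lemma double_sum_le_card_mult:
  fixes f :: "'i \<Rightarrow> 'h \<Rightarrow> real"
  assumes "\<And>i h. i \<in> I \<Longrightarrow> h \<in> R i \<Longrightarrow> f i h \<le> B"
  shows "(\<Sum>i\<in>I. \<Sum>h\<in>R i. f i h) \<le> (\<Sum>i\<in>I. real (card (R i))) * B"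
proof -
  have "(\<Sum>i\<in>I. \<Sum>h\<in>R i. f i h) \<le> (\<Sum>i\<in>I. real (card (R i)) * B)"
    by (rule sum_mono) (use sum_bounded_above[of "R _" "f _" B] assms in auto)
  then show ?thesis by (simp add: sum_distrib_right)
qed

lemma rtranclp_increment_bound:
  fixes E :: "'a \<Rightarrow> 'a \<Rightarrow> bool"
  assumes "E\<^sup>*\<^sup>* i j"
  shows "\<exists>k::nat. \<forall>(f::'a \<Rightarrow> real) m.
           (\<forall>a b. E a b \<longrightarrow> f b \<le> f a + m) \<longrightarrow> f j \<le> f i + real k * m"
  using assms
proof (induction rule: rtranclp_induct)
  case base
  show ?case by (rule exI[of _ 0]) simp
next
  case (step y z)
  then obtain k where k: "\<forall>(f::'a \<Rightarrow> real) m.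
      (\<forall>a b. E a b \<longrightarrow> f b \<le> f a + m) \<longrightarrow> f y \<le> f i + real k * m"
    by blast
  show ?case
  proof (rule exI[of _ "Suc k"], intro allI impI)
    fix f :: "'a \<Rightarrow> real" and m assume h: "\<forall>a b. E a b \<longrightarrow> f b \<le> f a + m"
    have "f z \<le> f y + m" using h step by blast
    also have "\<dots> \<le> f i + real k * m + m" using k h by fastforce
    finally show "f z \<le> f i + real (Suc k) * m" by (simp add: algebra_simps)
  qed
qed

lemma mv_add: "mv M C (\<lambda>s. f s + g s) r = mv M C f r + mv M C g r"
  unfolding mv_def by (simp add: scaleR_right_distrib sum.distrib)

lemma mv_diff: "mv M C (\<lambda>s. f s - g s) r = mv M C f r - mv M C g r"
  unfolding mv_def by (simp add: scaleR_right_diff_distrib sum_subtractf)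

lemma mv_scaleR: "mv M C (\<lambda>s. x *\<^sub>R f s) r = x *\<^sub>R mv M C f r"
  unfolding mv_def by (simp add: scaleR_sum_right mult.commute)

lemma norm_mtv_le:
  assumes "finite R" "\<And>r s. \<bar>M r s\<bar> \<le> 1" "\<And>r. r \<in> R \<Longrightarrow> norm (f r) \<le> B"
  shows "norm (mtv M R f s) \<le> real (card R) * B"
proof -
  have "norm (mtv M R f s) \<le> (\<Sum>r\<in>R. norm (M r s *\<^sub>R f r))" unfolding mtv_def by (rule norm_sum)
  also have "\<dots> \<le> (\<Sum>r\<in>R. B)"
  proof (rule sum_mono)
    fix r assume r: "r \<in> R"
    have "norm (M r s *\<^sub>R f r) = \<bar>M r s\<bar> * norm (f r)" by simp
    also have "\<dots> \<le> 1 * B" by (rule mult_mono) (use assms r in auto)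
    finally show "norm (M r s *\<^sub>R f r) \<le> B" by simp
  qed
  finally show ?thesis by simp
qed

lemma mapply_diag:
  assumes "finite C" "s \<in> C" "\<And>s'. s' \<in> C \<Longrightarrow> s' \<noteq> s \<Longrightarrow> K s s' = 0"
  shows "mapply K C f s = K s s *\<^sub>R f s"
proof -
  have "mapply K C f s = (\<Sum>s'\<in>C. if s' = s then K s s *\<^sub>R f s else 0)"
    unfolding mapply_def by (rule sum.cong) (use assms in auto)
  also have "\<dots> = K s s *\<^sub>R f s" using assms by (simp add: sum.delta')
  finally show ?thesis .
qed

lemma norm_mapply_le:
  assumes "finite C" "\<And>s'. s' \<in> C \<Longrightarrow> \<bar>K s s'\<bar> \<le> \<kappa>" "\<And>s'. s' \<in> C \<Longrightarrow> norm (f s') \<le> B" "0 \<le> B"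
  shows "norm (mapply K C f s) \<le> real (card C) * (\<kappa> * B)"
proof -
  have "norm (mapply K C f s) \<le> (\<Sum>s'\<in>C. norm (K s s' *\<^sub>R f s'))" unfolding mapply_def by (rule norm_sum)
  also have "\<dots> \<le> (\<Sum>s'\<in>C. \<kappa> * B)"
  proof (rule sum_mono)
    fix s' assume s': "s' \<in> C"
    have "0 \<le> \<kappa>" using assms(2)[OF s'] by (meson abs_ge_zero order_trans)
    then have "\<bar>K s s'\<bar> * norm (f s') \<le> \<kappa> * B"
      using assms(2-4) s' by (intro mult_mono) auto
    then show "norm (K s s' *\<^sub>R f s') \<le> \<kappa> * B" by simp
  qed
  finally show ?thesis by simp
qed

lemma gram_diag_nonneg: "0 \<le> gram M R s s"
  unfolding gram_def by (intro sum_nonneg) auto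

lemma gram_diag_ge_1:
  assumes "finite R" "r0 \<in> R" "\<bar>M r0 s\<bar> = 1"
  shows "1 \<le> gram M R s s"
proof -
  have "M r0 s * M r0 s \<le> gram M R s s" unfolding gram_def
    by (rule member_le_sum[where f = "\<lambda>r. M r s * M r s"]) (use assms in auto)
  moreover have "M r0 s * M r0 s = 1" using assms(3) by (metis abs_mult_self_eq mult_1)
  ultimately show ?thesis by simp
qed

lemma gram_add_absm_eq_0:
  assumes "\<And>r. M r s * M r s' \<le> 0"
  shows "gram M R s s' + absm (gram M R) s s' = 0"
proof -
  have "gram M R s s' \<le> 0" unfolding gram_def by (rule sum_nonpos) (use assms in auto)
  then show ?thesis unfolding absm_def by simp
qed

lemma abs_gram_le_card:
  assumes "\<And>r s. \<bar>M r s\<bar> \<le> 1" "finite R"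
  shows "\<bar>gram M R s s'\<bar> \<le> real (card R)"
proof -
  have "\<bar>gram M R s s'\<bar> \<le> (\<Sum>r\<in>R. \<bar>M r s * M r s'\<bar>)" unfolding gram_def by (rule sum_abs)
  also have "\<dots> \<le> (\<Sum>r\<in>R. 1)"
  proof (rule sum_mono)
    fix r
    have "\<bar>M r s\<bar> * \<bar>M r s'\<bar> \<le> 1 * 1" by (rule mult_mono) (use assms in auto)
    then show "\<bar>M r s * M r s'\<bar> \<le> 1" by (simp add: abs_mult)
  qed
  finally show ?thesis by simp
qed

text \<open>This is why \<open>S\<^sub>i\<close> is positive semidefinite: \<open>H\<^sub>i\<close> and \<open>A\<^sub>i\<close> have entries of opposite sign
  in distinct columns of every row.\<close>

lemma absm_gram_eq_gram_abs:
  assumes "\<And>r s s'. s \<noteq> s' \<Longrightarrow> M r s * M r s' \<le> 0"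
  shows "absm (gram M R) s s' = gram (\<lambda>r s. \<bar>M r s\<bar>) R s s'"
proof (cases "s = s'")
  case True
  then show ?thesis unfolding absm_def gram_def
    by (simp add: abs_mult_self_eq sum_nonneg abs_of_nonneg)
next
  case False
  have "(\<Sum>r\<in>R. M r s * M r s') \<le> 0" by (rule sum_nonpos) (use assms False in auto)
  then have "\<bar>\<Sum>r\<in>R. M r s * M r s'\<bar> = (\<Sum>r\<in>R. - (M r s * M r s'))"
    by (simp add: sum_negf)
  also have "\<dots> = (\<Sum>r\<in>R. \<bar>M r s\<bar> * \<bar>M r s'\<bar>)"
    by (rule sum.cong) (use assms False in \<open>auto simp: abs_mult[symmetric] abs_of_nonpos\<close>)
  finally show ?thesis unfolding absm_def gram_def .
qed

lemma qf_gram: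
  assumes "finite R" "finite C"
  shows "qf (gram M R) C f = (\<Sum>r\<in>R. (norm (mv M C f r))\<^sup>2)"
proof -
  have "(\<Sum>r\<in>R. (norm (mv M C f r))\<^sup>2) = (\<Sum>r\<in>R. \<Sum>s\<in>C. \<Sum>s'\<in>C. M r s' * (M r s * (f s \<bullet> f s')))"
    unfolding mv_def power2_norm_eq_inner
    by (simp add: inner_sum_left inner_sum_right mult.assoc sum_distrib_left inner_commute)
  also have "\<dots> = (\<Sum>s\<in>C. \<Sum>s'\<in>C. \<Sum>r\<in>R. M r s' * (M r s * (f s \<bullet> f s')))"
    by (simp add: sum.swap[of _ R])
  also have "\<dots> = qf (gram M R) C f"
    unfolding qf_def gram_def by (simp add: sum_distrib_left mult.commute mult.left_commute)
  finally show ?thesis by simp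
qed

lemma qf_add_mult: "qf (\<lambda>s s'. K1 s s' + a * K2 s s') C f = qf K1 C f + a * qf K2 C f"
  unfolding qf_def by (simp add: algebra_simps sum.distrib sum_distrib_left)

definition bform :: "('s \<Rightarrow> 's \<Rightarrow> real) \<Rightarrow> 's set \<Rightarrow> ('s \<Rightarrow> real^'n) \<Rightarrow> ('s \<Rightarrow> real^'n) \<Rightarrow> real" where
  "bform K C f g = (\<Sum>s\<in>C. \<Sum>s'\<in>C. K s s' * (f s \<bullet> g s'))"

lemma qf_eq_bform: "qf K C f = bform K C f f"
  unfolding qf_def bform_def ..

lemma bform_sym:
  assumes "\<And>s s'. K s s' = K s' s"
  shows "bform K C f g = bform K C g f"
  unfolding bform_def by (subst sum.swap) (simp add: assms inner_commute)

lemma bform_add_left: "bform K C (\<lambda>s. f s + g s) h = bform K C f h + bform K C g h"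
  unfolding bform_def by (simp add: inner_add_left algebra_simps sum.distrib)

lemma bform_add_right: "bform K C h (\<lambda>s. f s + g s) = bform K C h f + bform K C h g"
  unfolding bform_def by (simp add: inner_add_right algebra_simps sum.distrib)

lemma bform_diff_left: "bform K C (\<lambda>s. f s - g s) h = bform K C f h - bform K C g h"
  unfolding bform_def by (simp add: inner_diff_left algebra_simps sum_subtractf)

lemma bform_diff_right: "bform K C h (\<lambda>s. f s - g s) = bform K C h f - bform K C h g"
  unfolding bform_def by (simp add: inner_diff_right algebra_simps sum_subtractf)

lemma bform_scaleR_left: "bform K C (\<lambda>s. x *\<^sub>R f s) h = x * bform K C f h"
  unfolding bform_def by (simp add: algebra_simps sum_distrib_left)

lemma bform_scaleR_right: "bform K C h (\<lambda>s. x *\<^sub>R f s) = x * bform K C h f"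
  unfolding bform_def by (simp add: algebra_simps sum_distrib_left)

lemma qf_add_scaleR:
  assumes "\<And>s s'. K s s' = K s' s"
  shows "qf K C (\<lambda>s. f s + x *\<^sub>R g s) = qf K C f + 2 * x * bform K C f g + x\<^sup>2 * qf K C g"
  unfolding qf_eq_bform bform_add_left bform_add_right bform_scaleR_left bform_scaleR_right
  using bform_sym[OF assms, where C=C and f=g and g=f]
  by (simp add: power2_eq_square algebra_simps)

lemma two_bform_diff_eq:
  assumes "\<And>s s'. K s s' = K s' s"
  shows "2 * bform K C (\<lambda>s. a s - b s) a = qf K C a - qf K C b + qf K C (\<lambda>s. a s - b s)"
  unfolding qf_eq_bform bform_diff_left bform_diff_right
  using bform_sym[OF assms, where C=C and f=a and g=b]
  by (simp add: algebra_simps)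

lemma abs_bform_le:
  assumes "\<And>s. s \<in> C \<Longrightarrow> norm (f s) \<le> \<alpha>" "\<And>s. s \<in> C \<Longrightarrow> norm (g s) \<le> \<beta>"
    "\<And>s s'. s \<in> C \<Longrightarrow> s' \<in> C \<Longrightarrow> \<bar>K s s'\<bar> \<le> \<kappa>"
  shows "\<bar>bform K C f g\<bar> \<le> real (card C) * real (card C) * \<kappa> * \<alpha> * \<beta>"
proof -
  have term_le: "\<bar>K s s' * (f s \<bullet> g s')\<bar> \<le> \<kappa> * \<alpha> * \<beta>" if "s \<in> C" "s' \<in> C" for s s'
  proof -
    have "0 \<le> \<alpha>" "0 \<le> \<beta>" using assms(1,2)[OF that(1)] norm_ge_zero order_trans by blast+
    have "\<bar>f s \<bullet> g s'\<bar> \<le> norm (f s) * norm (g s')" by (rule Cauchy_Schwarz_ineq2)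
    also have "\<dots> \<le> \<alpha> * \<beta>" by (rule mult_mono) (use assms that \<open>0 \<le> \<alpha>\<close> \<open>0 \<le> \<beta>\<close> in auto)
    finally have fg: "\<bar>f s \<bullet> g s'\<bar> \<le> \<alpha> * \<beta>" .
    have k: "\<bar>K s s'\<bar> \<le> \<kappa>" using assms(3) that by auto
    have "\<bar>K s s'\<bar> * \<bar>f s \<bullet> g s'\<bar> \<le> \<kappa> * (\<alpha> * \<beta>)"
      by (rule mult_mono[OF k fg]) (use k in auto)
    then show ?thesis by (simp add: abs_mult mult.assoc)
  qed
  have "\<bar>bform K C f g\<bar> \<le> (\<Sum>s\<in>C. \<bar>\<Sum>s'\<in>C. K s s' * (f s \<bullet> g s')\<bar>)"
    unfolding bform_def by (rule sum_abs)
  also have "\<dots> \<le> (\<Sum>s\<in>C. \<Sum>s'\<in>C. \<bar>K s s' * (f s \<bullet> g s')\<bar>)"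
    by (rule sum_mono) (rule sum_abs)
  also have "\<dots> \<le> (\<Sum>s\<in>C. \<Sum>s'\<in>C. \<kappa> * \<alpha> * \<beta>)"
    by (rule sum_mono, rule sum_mono) (use term_le in auto)
  also have "\<dots> = real (card C) * real (card C) * \<kappa> * \<alpha> * \<beta>" by simp
  finally show ?thesis .
qed

lemma finite_nodes [simp]: "finite (nodes N)" by (simp add: nodes_def)
lemma finite_nbrs [simp]: "finite (nbrs E N i)" by (simp add: nbrs_def nodes_def)
lemma finite_slots [simp]: "finite (slots E N i)" by (simp add: slots_def)
lemma finite_hrows [simp]: "finite (hrows E N i)" by (simp add: hrows_def)
lemma finite_arows [simp]: "finite (arows E N i)" by (simp add: arows_def)

lemma slots_mem [simp]:
  "SX \<in> slots E N i" "SY \<in> slots E N i"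
  "j \<in> nbrs E N i \<Longrightarrow> SPm j \<in> slots E N i"
  "j \<in> nbrs E N i \<Longrightarrow> SPp j \<in> slots E N i"
  "j \<in> nbrs E N i \<Longrightarrow> SQm j \<in> slots E N i"
  "j \<in> nbrs E N i \<Longrightarrow> SQp j \<in> slots E N i"
  by (auto simp: slots_def)

lemma hrows_mem [simp]: "HU \<in> hrows E N i" "j \<in> nbrs E N i \<Longrightarrow> HV j \<in> hrows E N i"
  by (auto simp: hrows_def)

lemma arows_mem [simp]:
  "j \<in> nbrs E N i \<Longrightarrow> AP j \<in> arows E N i"
  "j \<in> nbrs E N i \<Longrightarrow> AQm j \<in> arows E N i"
  "j \<in> nbrs E N i \<Longrightarrow> AQp j \<in> arows E N i"
  by (auto simp: arows_def)

lemma slots_cases: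
  assumes "s \<in> slots E N i"
  obtains "s = SX" | "s = SY" | j where "j \<in> nbrs E N i" "s = SPm j"
    | j where "j \<in> nbrs E N i" "s = SPp j" | j where "j \<in> nbrs E N i" "s = SQm j"
    | j where "j \<in> nbrs E N i" "s = SQp j"
  using assms unfolding slots_def by auto

lemma hrows_cases:
  assumes "h \<in> hrows E N i"
  obtains "h = HU" | j where "j \<in> nbrs E N i" "h = HV j"
  using assms unfolding hrows_def by auto

lemma arows_cases:
  assumes "a \<in> arows E N i"
  obtains j where "j \<in> nbrs E N i" "a = AP j" | j where "j \<in> nbrs E N i" "a = AQm j"
    | j where "j \<in> nbrs E N i" "a = AQp j"
  using assms unfolding arows_def by auto

lemma mv_Hmat_HV: "j \<in> nbrs E N i \<Longrightarrow> mv Hmat (slots E N i) f (HV j) = f SX - f (SPp j)"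
  unfolding mv_def by (simp add: sum_pm_indicator_scaleR)

lemma mv_Hmat_HU: "mv Hmat (slots E N i) f HU = f SX - f SY"
  unfolding mv_def by (simp add: sum_pm_indicator_scaleR)

lemma mv_Amat_AP: "j \<in> nbrs E N i \<Longrightarrow> mv Amat (slots E N i) f (AP j) = f SX - f (SPm j)"
  unfolding mv_def by (simp add: sum_pm_indicator_scaleR)

lemma mv_Amat_AQm: "j \<in> nbrs E N i \<Longrightarrow> mv Amat (slots E N i) f (AQm j) = f SY - f (SQm j)"
  unfolding mv_def by (simp add: sum_pm_indicator_scaleR)

lemma mv_Amat_AQp: "j \<in> nbrs E N i \<Longrightarrow> mv Amat (slots E N i) f (AQp j) = f SY - f (SQp j)"
  unfolding mv_def by (simp add: sum_pm_indicator_scaleR)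

lemma norm_mv_Hmat_le:
  assumes "\<And>s. s \<in> slots E N i \<Longrightarrow> norm (f s) \<le> m" and "h \<in> hrows E N i"
  shows "norm (mv Hmat (slots E N i) f h) \<le> 2 * m"
  using assms(2)
proof (cases rule: hrows_cases)
  case 1 then show ?thesis
    using norm_triangle_ineq4[of "f SX" "f SY"] assms(1)[of SX] assms(1)[of SY] by (simp add: mv_Hmat_HU)
next
  case (2 j) then show ?thesis
    using norm_triangle_ineq4[of "f SX" "f (SPp j)"] assms(1)[of SX] assms(1)[of "SPp j"]
    by (simp add: mv_Hmat_HV)
qed

lemma Hmat_mult_nonpos: "s \<noteq> s' \<Longrightarrow> Hmat r s * Hmat r s' \<le> 0"
  by (cases r) auto

lemma Amat_mult_nonpos: "s \<noteq> s' \<Longrightarrow> Amat r s * Amat r s' \<le> 0"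
  by (cases r) auto

lemma abs_Hmat_le_1: "\<bar>Hmat r s\<bar> \<le> 1"
  by (cases r) auto

lemma abs_Amat_le_1: "\<bar>Amat r s\<bar> \<le> 1"
  by (cases r) auto

lemma Smat_sym: "Smat c E N i s s' = Smat c E N i s' s"
  unfolding Smat_def absm_def gram_def by (simp add: mult.commute)

lemma qf_Smat_nonneg:
  assumes "c > 0"
  shows "0 \<le> qf (Smat c E N i) (slots E N i) f"
proof -
  have eqA: "absm (gram Amat (arows E N i)) = gram (\<lambda>r s. \<bar>Amat r s\<bar>) (arows E N i)"
    by (intro ext absm_gram_eq_gram_abs Amat_mult_nonpos)
  have eqH: "absm (gram Hmat (hrows E N i)) = gram (\<lambda>r s. \<bar>Hmat r s\<bar>) (hrows E N i)"
    by (intro ext absm_gram_eq_gram_abs Hmat_mult_nonpos)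
  have "qf (Smat c E N i) (slots E N i) f
     = (\<Sum>r\<in>arows E N i. (norm (mv (\<lambda>r s. \<bar>Amat r s\<bar>) (slots E N i) f r))\<^sup>2)
      + (1/c) * (\<Sum>r\<in>hrows E N i. (norm (mv (\<lambda>r s. \<bar>Hmat r s\<bar>) (slots E N i) f r))\<^sup>2)"
    unfolding Smat_def qf_add_mult eqA eqH by (simp add: qf_gram)
  also have "\<dots> \<ge> 0" using assms by (intro add_nonneg_nonneg mult_nonneg_nonneg sum_nonneg) auto
  finally show ?thesis .
qed

lemma abs_Smat_le:
  assumes "c > 0"
  shows "\<bar>Smat c E N i s s'\<bar> \<le> real (card (arows E N i)) + real (card (hrows E N i)) / c"
proof -
  have A: "\<bar>gram Amat (arows E N i) s s'\<bar> \<le> real (card (arows E N i))"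
    by (rule abs_gram_le_card) (auto intro: abs_Amat_le_1)
  have H: "\<bar>gram Hmat (hrows E N i) s s'\<bar> \<le> real (card (hrows E N i))"
    by (rule abs_gram_le_card) (auto intro: abs_Hmat_le_1)
  have "\<bar>Smat c E N i s s'\<bar> \<le> \<bar>gram Amat (arows E N i) s s'\<bar> + (1/c) * \<bar>gram Hmat (hrows E N i) s s'\<bar>"
    unfolding Smat_def absm_def using assms by simp
  also have "\<dots> \<le> real (card (arows E N i)) + (1/c) * real (card (hrows E N i))"
    using A H assms by (intro add_mono mult_left_mono) auto
  finally show ?thesis by simp
qed

lemma Umat_offdiag:
  assumes "c > 0" "s \<noteq> s'"
  shows "Umat c E N i s s' = 0"
proof -
  have "Umat c E N i s s' = (gram Hmat (hrows E N i) s s' + absm (gram Hmat (hrows E N i)) s s')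
      + c * (gram Amat (arows E N i) s s' + absm (gram Amat (arows E N i)) s s')"
    unfolding Umat_def Smat_def using assms(1) by (simp add: algebra_simps)
  also have "\<dots> = 0"
    using gram_add_absm_eq_0[of Hmat s s'] gram_add_absm_eq_0[of Amat s s']
      Hmat_mult_nonpos[OF assms(2)] Amat_mult_nonpos[OF assms(2)] by simp
  finally show ?thesis .
qed

lemma Umat_diag_ge:
  assumes "c > 0" "s \<in> slots E N i"
  shows "2 * min 1 c \<le> Umat c E N i s s"
proof -
  have eq: "Umat c E N i s s = 2 * gram Hmat (hrows E N i) s s + 2 * c * gram Amat (arows E N i) s s"
    unfolding Umat_def Smat_def absm_def
    using assms(1) gram_diag_nonneg[of Hmat "hrows E N i" s] gram_diag_nonneg[of Amat "arows E N i" s]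
    by (simp add: algebra_simps)
  have H: "2 * min 1 c \<le> Umat c E N i s s" if "1 \<le> gram Hmat (hrows E N i) s s"
    unfolding eq using that gram_diag_nonneg[of Amat "arows E N i" s] assms(1)
    by (smt (verit) mult_nonneg_nonneg)
  have A: "2 * min 1 c \<le> Umat c E N i s s" if "1 \<le> gram Amat (arows E N i) s s"
  proof -
    have "c * 1 \<le> c * gram Amat (arows E N i) s s" using that assms(1) by (intro mult_left_mono) auto
    then show ?thesis unfolding eq using gram_diag_nonneg[of Hmat "hrows E N i" s] by linarith
  qed
  from assms(2) show ?thesis
  proof (cases rule: slots_cases)
    case 1 then show ?thesis by (intro H gram_diag_ge_1[of _ HU]) auto
  next
    case 2 then show ?thesis by (intro H gram_diag_ge_1[of _ HU]) auto
  next
    case (3 j) then show ?thesis by (intro A gram_diag_ge_1[of _ "AP j"]) auto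
  next
    case (4 j) then show ?thesis by (intro H gram_diag_ge_1[of _ "HV j"]) auto
  next
    case (5 j) then show ?thesis by (intro A gram_diag_ge_1[of _ "AQm j"]) auto
  next
    case (6 j) then show ?thesis by (intro A gram_diag_ge_1[of _ "AQp j"]) auto
  qed
qed

section \<open>Anchored connected graphs\<close>

locale anchored_graph =
  fixes E :: "nat \<Rightarrow> nat \<Rightarrow> bool" and N :: nat and anc :: "nat set"
  assumes E_nodes: "\<And>i j. E i j \<Longrightarrow> i \<in> nodes N \<and> j \<in> nodes N"
    and E_sym: "\<And>i j. E i j \<Longrightarrow> E j i"
    and connected: "\<And>i j. i \<in> nodes N \<Longrightarrow> j \<in> nodes N \<Longrightarrow> E\<^sup>*\<^sup>* i j"
    and anc_sub: "anc \<subseteq> nodes N" and anc_ne: "anc \<noteq> {}"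
begin

abbreviation "Hv i f h \<equiv> mv Hmat (slots E N i) f h"
abbreviation "Av i f a \<equiv> mv Amat (slots E N i) f a"

lemma nbrsI: "E i j \<Longrightarrow> j \<in> nbrs E N i"
  using E_nodes by (auto simp: nbrs_def)

lemma nbrsD:
  assumes "j \<in> nbrs E N i"
  shows "E i j" "E j i" "j \<in> nodes N" "i \<in> nbrs E N j"
  using assms E_nodes E_sym by (auto simp: nbrs_def)

text \<open>The linear space parallel to \<open>X \<inter> Y\<close>.\<close>

definition feas_hom :: "(nat \<Rightarrow> slot \<Rightarrow> real^'n) \<Rightarrow> bool" where
  "feas_hom v \<longleftrightarrow> (\<forall>i\<in>anc. v i SX = 0) \<and>
     (\<forall>i\<in>nodes N. \<forall>j\<in>nbrs E N i. v i (SPp j) = v j (SPm i) \<and> v i (SQp j) = v j (SQm i))"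

lemma feas_hom_diff:
  "feasXY E N anc apos u \<Longrightarrow> feasXY E N anc apos u' \<Longrightarrow> feas_hom (\<lambda>i s. u i s - u' i s)"
  unfolding feasXY_def feas_hom_def by auto

lemma feasXY_add_scaleR:
  "feasXY E N anc apos u \<Longrightarrow> feas_hom v \<Longrightarrow> feasXY E N anc apos (\<lambda>i s. u i s + x *\<^sub>R v i s)"
  unfolding feasXY_def feas_hom_def by auto

lemma feas_hom_add_scaleR: "feas_hom u \<Longrightarrow> feas_hom v \<Longrightarrow> feas_hom (\<lambda>i s. u i s + x *\<^sub>R v i s)"
  unfolding feas_hom_def by auto

lemma feas_hom_zero: "feas_hom (\<lambda>i s. 0)"
  unfolding feas_hom_def by auto

definition anchor0 :: nat where "anchor0 = (SOME a. a \<in> anc)"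

lemma anchor0_anc: "anchor0 \<in> anc"
  unfolding anchor0_def using anc_ne by (auto intro: someI_ex)

lemma anchor0_node: "anchor0 \<in> nodes N"
  using anchor0_anc anc_sub by auto

lemma increment_bound_ex:
  "\<exists>K\<ge>0. \<forall>j\<in>nodes N. \<forall>(f::nat \<Rightarrow> real) m. 0 \<le> m \<longrightarrow>
     (\<forall>a b. E a b \<longrightarrow> f b \<le> f a + m) \<longrightarrow> f j \<le> f anchor0 + K * m"
proof -
  have "\<forall>j\<in>nodes N. \<exists>k::nat. \<forall>(f::nat \<Rightarrow> real) m.
      (\<forall>a b. E a b \<longrightarrow> f b \<le> f a + m) \<longrightarrow> f j \<le> f anchor0 + real k * m"
  proof
    fix j assume "j \<in> nodes N"
    then have "E\<^sup>*\<^sup>* anchor0 j" using connected anchor0_node by blast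
    then show "\<exists>k::nat. \<forall>(f::nat \<Rightarrow> real) m.
        (\<forall>a b. E a b \<longrightarrow> f b \<le> f a + m) \<longrightarrow> f j \<le> f anchor0 + real k * m"
      by (rule rtranclp_increment_bound)
  qed
  then obtain k where k: "\<forall>j\<in>nodes N. \<forall>(f::nat \<Rightarrow> real) m.
      (\<forall>a b. E a b \<longrightarrow> f b \<le> f a + m) \<longrightarrow> f j \<le> f anchor0 + real (k j) * m"
    by (metis (no_types, lifting) bchoice)
  define K where "K = (\<Sum>j\<in>nodes N. real (k j))"
  show ?thesis
  proof (intro exI[of _ K] conjI ballI allI impI)
    show "0 \<le> K" unfolding K_def by (intro sum_nonneg) auto
    fix j and f :: "nat \<Rightarrow> real" and m :: real
    assume j: "j \<in> nodes N" and m: "0 \<le> m" and h: "\<forall>a b. E a b \<longrightarrow> f b \<le> f a + m"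
    have "real (k j) \<le> K" unfolding K_def by (rule member_le_sum) (use j in auto)
    then have "real (k j) * m \<le> K * m" using m by (rule mult_right_mono)
    then show "f j \<le> f anchor0 + K * m" using k j h by fastforce
  qed
qed

definition hop_const :: real where
  "hop_const = (SOME K. K \<ge> 0 \<and> (\<forall>j\<in>nodes N. \<forall>(f::nat \<Rightarrow> real) m. 0 \<le> m \<longrightarrow>
     (\<forall>a b. E a b \<longrightarrow> f b \<le> f a + m) \<longrightarrow> f j \<le> f anchor0 + K * m))"

lemma hop_const_nonneg: "0 \<le> hop_const"
  using someI_ex[OF increment_bound_ex] unfolding hop_const_def by blast

lemma le_hop_const:
  fixes f :: "nat \<Rightarrow> real"
  assumes "j \<in> nodes N" "0 \<le> m" "\<And>a b. E a b \<Longrightarrow> f b \<le> f a + m"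
  shows "f j \<le> f anchor0 + hop_const * m"
  using someI_ex[OF increment_bound_ex] assms unfolding hop_const_def[symmetric] by blast

lemma norm_diff_anchor0_le:
  fixes g :: "nat \<Rightarrow> real^'n"
  assumes "j \<in> nodes N" "0 \<le> m" "\<And>a b. E a b \<Longrightarrow> norm (g b - g a) \<le> m"
  shows "norm (g j - g anchor0) \<le> hop_const * m"
proof -
  have "norm (g j - g anchor0) \<le> norm (g anchor0 - g anchor0) + hop_const * m"
  proof (rule le_hop_const[OF assms(1,2)])
    fix a b assume "E a b"
    then show "norm (g b - g anchor0) \<le> norm (g a - g anchor0) + m"
      using norm_triangle_ineq[of "g b - g a" "g a - g anchor0"] assms(3)[of a b] by simp
  qed
  then show ?thesis by simp
qed

text \<open>Coercivity on the parallel space: \<open>x\<^sub>b - x\<^sub>a\<close> is a sum of an \<open>H\<close>-row of \<open>a\<close> and an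
  \<open>A\<close>-row of \<open>b\<close> (through the shared block \<open>p\<^sup>+\<^sub>a\<^sub>,\<^sub>b = p\<^sup>-\<^sub>b\<^sub>,\<^sub>a\<close>), and \<open>x\<close> vanishes at the anchors.\<close>

lemma feas_hom_norm_le:
  assumes v: "feas_hom v" and m: "0 \<le> m"
    and H: "\<And>i h. i \<in> nodes N \<Longrightarrow> h \<in> hrows E N i \<Longrightarrow> norm (Hv i (v i) h) \<le> m"
    and A: "\<And>i a. i \<in> nodes N \<Longrightarrow> a \<in> arows E N i \<Longrightarrow> norm (Av i (v i) a) \<le> m"
    and i: "i \<in> nodes N" and s: "s \<in> slots E N i"
  shows "norm (v i s) \<le> (2 * hop_const + 2) * m"
proof -
  have edge: "norm (v b SX - v a SX) \<le> 2 * m" if ab: "E a b" for a b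
  proof -
    have b: "b \<in> nbrs E N a" and a: "a \<in> nbrs E N b" using ab E_sym nbrsI by blast+
    have an: "a \<in> nodes N" "b \<in> nodes N" using E_nodes[OF ab] by auto
    have "v a (SPp b) = v b (SPm a)" using v an(1) b unfolding feas_hom_def by blast
    then have "v b SX - v a SX = Av b (v b) (AP a) - Hv a (v a) (HV b)"
      by (simp add: mv_Hmat_HV[OF b] mv_Amat_AP[OF a])
    then show ?thesis
      using norm_triangle_ineq4[of "Av b (v b) (AP a)" "Hv a (v a) (HV b)"]
        H[OF an(1) hrows_mem(2)[OF b]] A[OF an(2) arows_mem(1)[OF a]]
      by simp
  qed
  have "v anchor0 SX = 0" using v anchor0_anc unfolding feas_hom_def by blast
  then have xi: "norm (v i SX) \<le> hop_const * (2 * m)"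
    using norm_diff_anchor0_le[where g = "\<lambda>j. v j SX", OF i _ edge] m by simp
  have row_le: "norm (v i s') \<le> norm (v i s'') + m"
    if "v i s' = v i s'' - u" "norm u \<le> m" for s' s'' u
    using that norm_triangle_ineq4[of "v i s''" u] by simp
  have y: "norm (v i SY) \<le> hop_const * (2 * m) + m"
    using row_le[of SY SX, OF _ H[OF i, of HU]] xi by (simp add: mv_Hmat_HU)
  have "norm (v i s) \<le> hop_const * (2 * m) + 2 * m"
    using s
  proof (cases rule: slots_cases)
    case (3 j) then show ?thesis
      using row_le[of "SPm j" SX, OF _ A[OF i, of "AP j"]] xi m by (simp add: mv_Amat_AP)
  next
    case (4 j) then show ?thesis
      using row_le[of "SPp j" SX, OF _ H[OF i, of "HV j"]] xi m by (simp add: mv_Hmat_HV)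
  next
    case (5 j) then show ?thesis
      using row_le[of "SQm j" SY, OF _ A[OF i, of "AQm j"]] y m by (simp add: mv_Amat_AQm)
  next
    case (6 j) then show ?thesis
      using row_le[of "SQp j" SY, OF _ A[OF i, of "AQp j"]] y m by (simp add: mv_Amat_AQp)
  qed (use xi y m in auto)
  then show ?thesis by (simp add: algebra_simps)
qed

text \<open>A representative of \<open>A \<zeta>\<close> that is controlled by \<open>A \<zeta>\<close> alone: the \<open>x\<close>-blocks are set to
  zero and the \<open>y\<close>-blocks are measured relative to the \<open>y\<close>-block of the fixed anchor.\<close>

definition dual_lift :: "(nat \<Rightarrow> slot \<Rightarrow> real^'n) \<Rightarrow> nat \<Rightarrow> slot \<Rightarrow> real^'n" where
  "dual_lift \<zeta> i s = (case s of
      SX \<Rightarrow> 0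
    | SPm j \<Rightarrow> \<zeta> i (SPm j) - \<zeta> i SX
    | SPp j \<Rightarrow> \<zeta> i (SPp j) - \<zeta> j SX
    | SY \<Rightarrow> \<zeta> i SY - \<zeta> anchor0 SY
    | SQm j \<Rightarrow> \<zeta> i (SQm j) - \<zeta> anchor0 SY
    | SQp j \<Rightarrow> \<zeta> i (SQp j) - \<zeta> anchor0 SY)"

lemma feas_hom_dual_lift: "feas_hom \<zeta> \<Longrightarrow> feas_hom (dual_lift \<zeta>)"
  unfolding feas_hom_def dual_lift_def by simp

lemma mv_Amat_dual_lift: "a \<in> arows E N i \<Longrightarrow> Av i (dual_lift \<zeta> i) a = Av i (\<zeta> i) a"
  by (cases rule: arows_cases) (auto simp: mv_Amat_AP mv_Amat_AQm mv_Amat_AQp dual_lift_def)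

lemma norm_dual_lift_le:
  assumes \<zeta>: "feas_hom \<zeta>" and m: "0 \<le> m"
    and A: "\<And>i a. i \<in> nodes N \<Longrightarrow> a \<in> arows E N i \<Longrightarrow> norm (Av i (\<zeta> i) a) \<le> m"
    and i: "i \<in> nodes N" and s: "s \<in> slots E N i"
  shows "norm (dual_lift \<zeta> i s) \<le> (2 * hop_const + 1) * m"
proof -
  have pair: "\<zeta> a (SPp b) = \<zeta> b (SPm a)" "\<zeta> a (SQp b) = \<zeta> b (SQm a)"
    if "a \<in> nodes N" "b \<in> nbrs E N a" for a b
    using \<zeta> that unfolding feas_hom_def by blast+
  have edge: "norm (\<zeta> b SY - \<zeta> a SY) \<le> 2 * m" if ab: "E a b" for a b
  proof -
    have b: "b \<in> nbrs E N a" and a: "a \<in> nbrs E N b" using ab E_sym nbrsI by blast+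
    have an: "a \<in> nodes N" "b \<in> nodes N" using E_nodes[OF ab] by auto
    have "\<zeta> b SY - \<zeta> a SY = Av b (\<zeta> b) (AQp a) - Av a (\<zeta> a) (AQm b)"
      by (simp add: mv_Amat_AQm[OF b] mv_Amat_AQp[OF a] pair(2)[OF an(2) a])
    then show ?thesis
      using norm_triangle_ineq4[of "Av b (\<zeta> b) (AQp a)" "Av a (\<zeta> a) (AQm b)"]
        A[OF an(1) arows_mem(2)[OF b]] A[OF an(2) arows_mem(3)[OF a]]
      by simp
  qed
  have y: "norm (\<zeta> i SY - \<zeta> anchor0 SY) \<le> 2 * hop_const * m"
    using norm_diff_anchor0_le[where g = "\<lambda>j. \<zeta> j SY", OF i _ edge] m by (simp add: algebra_simps)
  have Km: "0 \<le> hop_const * m" using hop_const_nonneg m by simp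
  have yq: "norm (dual_lift \<zeta> i s) \<le> 2 * hop_const * m + m"
    if "dual_lift \<zeta> i s = (\<zeta> i SY - \<zeta> anchor0 SY) - u" "norm u \<le> m" for u
    using that y norm_triangle_ineq4[of "\<zeta> i SY - \<zeta> anchor0 SY" u] by simp
  have "norm (dual_lift \<zeta> i s) \<le> 2 * hop_const * m + m"
    using s
  proof (cases rule: slots_cases)
    case (3 j)
    then have "dual_lift \<zeta> i s = - Av i (\<zeta> i) (AP j)"
      by (simp add: dual_lift_def mv_Amat_AP)
    then show ?thesis using A[OF i, of "AP j"] 3 Km by simp
  next
    case (4 j)
    have jn: "j \<in> nodes N" "i \<in> nbrs E N j" using nbrsD[OF 4(1)] by auto
    have "dual_lift \<zeta> i s = - Av j (\<zeta> j) (AP i)"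
      using 4 by (simp add: dual_lift_def mv_Amat_AP[OF jn(2)] pair(1)[OF i 4(1)])
    then show ?thesis using A[OF jn(1), of "AP i"] jn Km by simp
  next
    case (5 j) then show ?thesis
      by (intro yq[OF _ A[OF i, of "AQm j"]]) (simp_all add: dual_lift_def mv_Amat_AQm)
  next
    case (6 j) then show ?thesis
      by (intro yq[OF _ A[OF i, of "AQp j"]]) (simp_all add: dual_lift_def mv_Amat_AQp)
  qed (use y m Km in \<open>auto simp: dual_lift_def\<close>)
  then show ?thesis by (simp add: algebra_simps)
qed

end

section \<open>Optimality of the primal update and descent\<close>

locale sp_admm_run = anchored_graph E N anc
  for E :: "nat \<Rightarrow> nat \<Rightarrow> bool" and N :: nat and anc :: "nat set" +
  fixes apos :: "nat \<Rightarrow> real^'n" and d :: "nat \<Rightarrow> nat \<Rightarrow> real" and r :: "nat \<Rightarrow> real"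
    and c \<rho> :: real
    and z :: "nat \<Rightarrow> nat \<Rightarrow> slot \<Rightarrow> real^'n" and w :: "nat \<Rightarrow> nat \<Rightarrow> hrow \<Rightarrow> real^'n"
    and lam :: "nat \<Rightarrow> nat \<Rightarrow> arow \<Rightarrow> real^'n" and ztil :: "nat \<Rightarrow> nat \<Rightarrow> slot \<Rightarrow> real^'n"
  assumes c_pos: "c > 0"
    and alg: "sp_admm_jcnl c \<rho> E N anc apos d r z w lam ztil"
begin

lemma lam_init: "i \<in> nodes N \<Longrightarrow> a \<in> arows E N i \<Longrightarrow> lam 0 i a = 0"
  using alg unfolding sp_admm_jcnl_def by blast

lemma z_feasible: "feasXY E N anc apos (z (Suc t))"
  using alg unfolding sp_admm_jcnl_def by blast

lemma z_minimal: "feasXY E N anc apos z' \<Longrightarrow>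
    zobj c E N d r (w t) (lam t) (z t) (z (Suc t)) \<le> zobj c E N d r (w t) (lam t) (z t) z'"
  using alg unfolding sp_admm_jcnl_def by blast

lemma w_update: "i \<in> nodes N \<Longrightarrow> h \<in> hrows E N i \<Longrightarrow> w (Suc t) i h = closest_point (cball 0 1)
    (w t i h + (1/\<rho>) *\<^sub>R (Dw d r i h *\<^sub>R Hv i (z (Suc t) i) h))"
  using alg unfolding sp_admm_jcnl_def by blast

lemma lam_update: "i \<in> nodes N \<Longrightarrow> a \<in> arows E N i \<Longrightarrow>
    lam (Suc t) i a = lam t i a + c *\<^sub>R Av i (z (Suc t) i) a"
  using alg unfolding sp_admm_jcnl_def by blast

lemma ztil_equation: "i \<in> nodes N \<Longrightarrow> s \<in> slots E N i \<Longrightarrow>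
    mapply (Umat c E N i) (slots E N i) (ztil (Suc t) i) s
    = mtv Hmat (hrows E N i) (\<lambda>h. Dw d r i h *\<^sub>R w t i h) s
      - mtv Amat (arows E N i) (lam t i) s
      + c *\<^sub>R mapply (Smat c E N i) (slots E N i) (z t i) s"
  using alg unfolding sp_admm_jcnl_def by blast

lemma norm_w_le_1:
  assumes "1 \<le> t" "i \<in> nodes N" "h \<in> hrows E N i"
  shows "norm (w t i h) \<le> 1"
proof -
  obtain t' where t: "t = Suc t'" using assms(1) by (cases t) auto
  have "closest_point (cball (0::real^'n) 1) (w t' i h + (1/\<rho>) *\<^sub>R (Dw d r i h *\<^sub>R Hv i (z t i) h))
     \<in> cball 0 1"
    by (rule closest_point_in_set) auto
  then show ?thesis unfolding t w_update[OF assms(2,3)] by simp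
qed

definition anchor_pos :: "nat \<Rightarrow> real^'n" where
  "anchor_pos i = (if i \<in> anc then apos i else 0)"

definition zref :: "nat \<Rightarrow> slot \<Rightarrow> real^'n" where
  "zref i s = (case s of SX \<Rightarrow> anchor_pos i | SPm j \<Rightarrow> anchor_pos i | SPp j \<Rightarrow> anchor_pos j | _ \<Rightarrow> 0)"

definition zdev :: "nat \<Rightarrow> nat \<Rightarrow> slot \<Rightarrow> real^'n" where
  "zdev t i s = z t i s - zref i s"

lemma feasXY_zref: "feasXY E N anc apos zref"
  unfolding feasXY_def zref_def anchor_pos_def by auto

lemma feas_hom_zdev: "feas_hom (zdev (Suc t))"
  unfolding zdev_def by (rule feas_hom_diff[OF z_feasible feasXY_zref])

lemma z_eq_zdev_add_zref: "z t i = (\<lambda>s. zdev t i s + zref i s)"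
  by (simp add: zdev_def fun_eq_iff)

lemma mv_Amat_zdev: "a \<in> arows E N i \<Longrightarrow> Av i (zdev t i) a = Av i (z t i) a"
proof -
  assume "a \<in> arows E N i"
  then have "Av i (zref i) a = 0"
    by (cases rule: arows_cases) (auto simp: mv_Amat_AP mv_Amat_AQm mv_Amat_AQp zref_def)
  moreover have "zdev t i = (\<lambda>s. z t i s - zref i s)" by (simp add: zdev_def fun_eq_iff)
  ultimately show ?thesis by (simp add: mv_diff)
qed

lemma norm_zref_le:
  assumes "i \<in> nodes N" "s \<in> slots E N i"
  shows "norm (zref i s) \<le> (\<Sum>k\<in>nodes N. norm (anchor_pos k))"
proof -
  have pos_le: "norm (anchor_pos k) \<le> (\<Sum>k\<in>nodes N. norm (anchor_pos k))" if "k \<in> nodes N" for k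
    by (rule member_le_sum) (use that in auto)
  have "0 \<le> (\<Sum>k\<in>nodes N. norm (anchor_pos k))" by (intro sum_nonneg) auto
  with assms(2) show ?thesis
  proof (cases rule: slots_cases)
    case (4 j) then show ?thesis using pos_le[of j] nbrsD(3)[OF 4(1)] by (simp add: zref_def)
  qed (use pos_le[OF assms(1)] in \<open>auto simp: zref_def\<close>)
qed

text \<open>Node \<open>i\<close>'s share of the derivative of the \<open>z\<close>-objective at \<open>z\<^sup>t\<^sup>+\<^sup>1\<close> in direction \<open>v\<close>
  (and of half its second derivative, below).\<close>

definition node_deriv :: "nat \<Rightarrow> nat \<Rightarrow> (slot \<Rightarrow> real^'n) \<Rightarrow> real" where
  "node_deriv t i v =
       (\<Sum>h\<in>hrows E N i. Hv i (z (Suc t) i) h \<bullet> Hv i v h)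
     - (\<Sum>h\<in>hrows E N i. Dw d r i h * (w t i h \<bullet> Hv i v h))
     + (\<Sum>a\<in>arows E N i. lam t i a \<bullet> Av i v a)
     + c * (\<Sum>a\<in>arows E N i. Av i (z (Suc t) i) a \<bullet> Av i v a)
     + c * bform (Smat c E N i) (slots E N i) (\<lambda>s. z (Suc t) i s - z t i s) v"

definition node_curv :: "nat \<Rightarrow> (slot \<Rightarrow> real^'n) \<Rightarrow> real" where
  "node_curv i v = (1/2) * (\<Sum>h\<in>hrows E N i. (norm (Hv i v h))\<^sup>2)
     + (c/2) * (\<Sum>a\<in>arows E N i. (norm (Av i v a))\<^sup>2)
     + (c/2) * qf (Smat c E N i) (slots E N i) v"

lemma zobj_add_scaleR:
  "zobj c E N d r (w t) (lam t) (z t) (\<lambda>i s. z (Suc t) i s + x *\<^sub>R v i s)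
   = zobj c E N d r (w t) (lam t) (z t) (z (Suc t))
     + x * (\<Sum>i\<in>nodes N. node_deriv t i (v i)) + x\<^sup>2 * (\<Sum>i\<in>nodes N. node_curv i (v i))"
proof -
  let ?z = "z (Suc t)"
  define F where "F i = Gi E N d r i (?z i) (w t i)
        + (\<Sum>a\<in>arows E N i. lam t i a \<bullet> Av i (?z i) a)
        + (c/2) * (\<Sum>a\<in>arows E N i. (norm (Av i (?z i) a))\<^sup>2)
        + (c/2) * qf (Smat c E N i) (slots E N i) (\<lambda>s. ?z i s - z t i s)" for i
  have regroup: "(1/2) * (P + 2*x*Q + x\<^sup>2*R) - (D1 + x*D2) + (L1 + x*L2)
      + (c/2) * (P' + 2*x*Q' + x\<^sup>2*R') + (c/2) * (S1 + 2*x*S2 + x\<^sup>2*S3)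
    = ((1/2)*P - D1 + L1 + (c/2)*P' + (c/2)*S1) + x*(Q - D2 + L2 + c*Q' + c*S2)
      + x\<^sup>2*((1/2)*R + (c/2)*R' + (c/2)*S3)"
    for P Q R D1 D2 L1 L2 P' Q' R' S1 S2 S3 :: real
    by (simp add: algebra_simps)
  have node: "Gi E N d r i (\<lambda>s. ?z i s + x *\<^sub>R v i s) (w t i)
        + (\<Sum>a\<in>arows E N i. lam t i a \<bullet> Av i (\<lambda>s. ?z i s + x *\<^sub>R v i s) a)
        + (c/2) * (\<Sum>a\<in>arows E N i. (norm (Av i (\<lambda>s. ?z i s + x *\<^sub>R v i s) a))\<^sup>2)
        + (c/2) * qf (Smat c E N i) (slots E N i) (\<lambda>s. ?z i s + x *\<^sub>R v i s - z t i s)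
      = F i + x * node_deriv t i (v i) + x\<^sup>2 * node_curv i (v i)" for i
  proof -
    have shift: "(\<lambda>s. ?z i s + x *\<^sub>R v i s - z t i s) = (\<lambda>s. (?z i s - z t i s) + x *\<^sub>R v i s)"
      by (simp add: fun_eq_iff algebra_simps)
    show ?thesis
      unfolding F_def node_deriv_def node_curv_def Gi_def shift qf_add_scaleR[OF Smat_sym]
        mv_add mv_scaleR sum_power2_norm_add_scaleR sum_weighted_inner_add_scaleR sum_inner_add_scaleR
      by (rule regroup)
  qed
  have "zobj c E N d r (w t) (lam t) (z t) (\<lambda>i s. ?z i s + x *\<^sub>R v i s)
      = (\<Sum>i\<in>nodes N. F i + x * node_deriv t i (v i) + x\<^sup>2 * node_curv i (v i))"
    unfolding zobj_def node by (rule refl)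
  also have "\<dots> = (\<Sum>i\<in>nodes N. F i)
      + x * (\<Sum>i\<in>nodes N. node_deriv t i (v i)) + x\<^sup>2 * (\<Sum>i\<in>nodes N. node_curv i (v i))"
    by (simp only: sum.distrib sum_distrib_left)
  also have "(\<Sum>i\<in>nodes N. F i) = zobj c E N d r (w t) (lam t) (z t) ?z"
    unfolding zobj_def F_def ..
  finally show ?thesis .
qed

lemma sum_node_deriv_eq_0:
  assumes "feas_hom v"
  shows "(\<Sum>i\<in>nodes N. node_deriv t i (v i)) = 0"
proof (rule linear_coeff_zero_if_quadratic_nonneg)
  fix x :: real
  have "zobj c E N d r (w t) (lam t) (z t) (z (Suc t))
      \<le> zobj c E N d r (w t) (lam t) (z t) (\<lambda>i s. z (Suc t) i s + x *\<^sub>R v i s)"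
    by (rule z_minimal[OF feasXY_add_scaleR[OF z_feasible assms]])
  then show "0 \<le> x * (\<Sum>i\<in>nodes N. node_deriv t i (v i)) + x\<^sup>2 * (\<Sum>i\<in>nodes N. node_curv i (v i))"
    unfolding zobj_add_scaleR by simp
qed

definition lyap :: "nat \<Rightarrow> real" where
  "lyap t = c * (\<Sum>i\<in>nodes N. qf (Smat c E N i) (slots E N i) (zdev t i))
       + (1/c) * (\<Sum>i\<in>nodes N. \<Sum>a\<in>arows E N i. (norm (lam t i a))\<^sup>2)"

definition pert :: "nat \<Rightarrow> nat \<Rightarrow> hrow \<Rightarrow> real^'n" where
  "pert t i h = Dw d r i h *\<^sub>R w t i h - Hv i (zref i) h"

definition Hres :: "nat \<Rightarrow> real" where
  "Hres t = (\<Sum>i\<in>nodes N. \<Sum>h\<in>hrows E N i. (norm (Hv i (zdev t i) h))\<^sup>2)"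

definition Ares :: "nat \<Rightarrow> real" where
  "Ares t = (\<Sum>i\<in>nodes N. \<Sum>a\<in>arows E N i. (norm (Av i (zdev t i) a))\<^sup>2)"

lemma fit_sum_eq:
  "(\<Sum>h\<in>hrows E N i. Hv i (z (Suc t) i) h \<bullet> Hv i v h)
     - (\<Sum>h\<in>hrows E N i. Dw d r i h * (w t i h \<bullet> Hv i v h))
   = (\<Sum>h\<in>hrows E N i. Hv i (zdev (Suc t) i) h \<bullet> Hv i v h) - (\<Sum>h\<in>hrows E N i. pert t i h \<bullet> Hv i v h)"
proof -
  have "Hv i (z (Suc t) i) h \<bullet> Hv i v h - Dw d r i h * (w t i h \<bullet> Hv i v h)
      = Hv i (zdev (Suc t) i) h \<bullet> Hv i v h - pert t i h \<bullet> Hv i v h" for h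
    unfolding pert_def z_eq_zdev_add_zref[of "Suc t" i] mv_add
    by (simp add: inner_add_left inner_diff_left)
  then show ?thesis by (simp add: sum_subtractf[symmetric])
qed

lemma two_node_deriv_zdev:
  assumes i: "i \<in> nodes N"
  defines "S \<equiv> qf (Smat c E N i) (slots E N i)" and "L \<equiv> \<lambda>t. \<Sum>a\<in>arows E N i. (norm (lam t i a))\<^sup>2"
  shows "2 * node_deriv t i (zdev (Suc t) i)
     = 2 * (\<Sum>h\<in>hrows E N i. (norm (Hv i (zdev (Suc t) i) h))\<^sup>2)
     - 2 * (\<Sum>h\<in>hrows E N i. pert t i h \<bullet> Hv i (zdev (Suc t) i) h)
     + (1/c) * L (Suc t) - (1/c) * L t + c * (\<Sum>a\<in>arows E N i. (norm (Av i (zdev (Suc t) i) a))\<^sup>2)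
     + c * S (zdev (Suc t) i) - c * S (zdev t i) + c * S (\<lambda>s. zdev (Suc t) i s - zdev t i s)"
proof -
  let ?b = "zdev (Suc t) i"
  define HH where "HH = (\<Sum>h\<in>hrows E N i. (norm (Hv i ?b h))\<^sup>2)"
  define GH where "GH = (\<Sum>h\<in>hrows E N i. pert t i h \<bullet> Hv i ?b h)"
  define LA where "LA = (\<Sum>a\<in>arows E N i. lam t i a \<bullet> Av i ?b a)"
  define AA where "AA = (\<Sum>a\<in>arows E N i. (norm (Av i ?b a))\<^sup>2)"
  define B where "B = bform (Smat c E N i) (slots E N i) (\<lambda>s. ?b s - zdev t i s) ?b"
  have fit: "(\<Sum>h\<in>hrows E N i. Hv i (z (Suc t) i) h \<bullet> Hv i ?b h)
      - (\<Sum>h\<in>hrows E N i. Dw d r i h * (w t i h \<bullet> Hv i ?b h)) = HH - GH"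
    unfolding fit_sum_eq HH_def GH_def by (simp add: power2_norm_eq_inner)
  have Az: "Av i (z (Suc t) i) a = Av i ?b a" if "a \<in> arows E N i" for a
    using mv_Amat_zdev[OF that] by simp
  have "L (Suc t) = L t + 2 * c * LA + c\<^sup>2 * AA"
  proof -
    have "lam (Suc t) i a = lam t i a + c *\<^sub>R Av i ?b a" if "a \<in> arows E N i" for a
      using lam_update[OF i that] Az[OF that] by simp
    then show ?thesis unfolding L_def LA_def AA_def by (simp add: sum_power2_norm_add_scaleR cong: sum.cong)
  qed
  then have dual: "(1/c) * L (Suc t) - (1/c) * L t = 2 * LA + c * AA"
    using c_pos by (simp add: field_simps power2_eq_square)
  have aug: "(\<Sum>a\<in>arows E N i. Av i (z (Suc t) i) a \<bullet> Av i ?b a) = AA"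
    unfolding AA_def by (rule sum.cong) (simp_all add: Az power2_norm_eq_inner)
  have prox: "2 * B = S ?b - S (zdev t i) + S (\<lambda>s. ?b s - zdev t i s)"
    unfolding B_def S_def by (rule two_bform_diff_eq[OF Smat_sym])
  have zdiff: "(\<lambda>s. z (Suc t) i s - z t i s) = (\<lambda>s. ?b s - zdev t i s)"
    by (simp add: zdev_def fun_eq_iff)
  have nd: "node_deriv t i ?b = HH - GH + LA + c * AA + c * B"
    unfolding node_deriv_def fit aug zdiff LA_def B_def ..
  have "c * (2 * B) = c * (S ?b - S (zdev t i) + S (\<lambda>s. ?b s - zdev t i s))"
    using prox by simp
  then have cprox: "2 * (c * B) = c * S ?b - c * S (zdev t i) + c * S (\<lambda>s. ?b s - zdev t i s)"
    by (simp add: algebra_simps)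
  show ?thesis
    unfolding HH_def[symmetric] GH_def[symmetric] AA_def[symmetric]
    using nd cprox dual by linarith
qed

lemma node_descent:
  assumes i: "i \<in> nodes N"
  defines "S \<equiv> qf (Smat c E N i) (slots E N i)" and "L \<equiv> \<lambda>t. \<Sum>a\<in>arows E N i. (norm (lam t i a))\<^sup>2"
  shows "c * S (zdev (Suc t) i) + (1/c) * L (Suc t)
    \<le> c * S (zdev t i) + (1/c) * L t
      - (\<Sum>h\<in>hrows E N i. (norm (Hv i (zdev (Suc t) i) h))\<^sup>2)
      - c * (\<Sum>a\<in>arows E N i. (norm (Av i (zdev (Suc t) i) a))\<^sup>2)
      + (\<Sum>h\<in>hrows E N i. (norm (pert t i h))\<^sup>2) + 2 * node_deriv t i (zdev (Suc t) i)"
proof -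
  have "2 * (\<Sum>h\<in>hrows E N i. pert t i h \<bullet> Hv i (zdev (Suc t) i) h)
      \<le> (\<Sum>h\<in>hrows E N i. (norm (pert t i h))\<^sup>2 + (norm (Hv i (zdev (Suc t) i) h))\<^sup>2)"
    unfolding sum_distrib_left by (intro sum_mono two_inner_le_sum_power2_norm)
  moreover have "0 \<le> c * S (\<lambda>s. zdev (Suc t) i s - zdev t i s)"
    unfolding S_def using c_pos qf_Smat_nonneg[OF c_pos] by (intro mult_nonneg_nonneg) auto
  ultimately show ?thesis
    using two_node_deriv_zdev[OF i, of t] unfolding S_def L_def sum.distrib by linarith
qed

lemma lyap_descent:
  "lyap (Suc t) \<le> lyap t - Hres (Suc t) - c * Ares (Suc t)
    + (\<Sum>i\<in>nodes N. \<Sum>h\<in>hrows E N i. (norm (pert t i h))\<^sup>2)"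
proof -
  have node_sum: "lyap t = (\<Sum>i\<in>nodes N. c * qf (Smat c E N i) (slots E N i) (zdev t i)
      + (1/c) * (\<Sum>a\<in>arows E N i. (norm (lam t i a))\<^sup>2))" for t
    unfolding lyap_def by (simp add: sum.distrib sum_distrib_left)
  have "lyap (Suc t) \<le> (\<Sum>i\<in>nodes N. c * qf (Smat c E N i) (slots E N i) (zdev t i)
      + (1/c) * (\<Sum>a\<in>arows E N i. (norm (lam t i a))\<^sup>2)
      - (\<Sum>h\<in>hrows E N i. (norm (Hv i (zdev (Suc t) i) h))\<^sup>2)
      - c * (\<Sum>a\<in>arows E N i. (norm (Av i (zdev (Suc t) i) a))\<^sup>2)
      + (\<Sum>h\<in>hrows E N i. (norm (pert t i h))\<^sup>2) + 2 * node_deriv t i (zdev (Suc t) i))"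
    unfolding node_sum by (intro sum_mono node_descent)
  also have "\<dots> = lyap t - Hres (Suc t) - c * Ares (Suc t)
      + (\<Sum>i\<in>nodes N. \<Sum>h\<in>hrows E N i. (norm (pert t i h))\<^sup>2)
      + 2 * (\<Sum>i\<in>nodes N. node_deriv t i (zdev (Suc t) i))"
    unfolding node_sum Hres_def Ares_def
    by (simp add: sum.distrib sum_subtractf sum_distrib_left)
  finally show ?thesis using sum_node_deriv_eq_0[OF feas_hom_zdev] by simp
qed

definition nH :: "real" where
  "nH = (\<Sum>i\<in>nodes N. real (card (hrows E N i)))"
definition nA :: "real" where
  "nA = (\<Sum>i\<in>nodes N. real (card (arows E N i)))"
definition nS :: "real" where
  "nS = (\<Sum>i\<in>nodes N. real (card (slots E N i)))"
definition nS2 :: "real" where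
  "nS2 = (\<Sum>i\<in>nodes N. real (card (slots E N i)) * real (card (slots E N i)))"
definition S_bound :: "real" where
  "S_bound = (\<Sum>i\<in>nodes N. real (card (arows E N i)) + real (card (hrows E N i)) / c)"
definition Href_bound :: "real" where
  "Href_bound = (\<Sum>i\<in>nodes N. \<Sum>h\<in>hrows E N i. norm (Hv i (zref i) h))"
definition D_bound :: "real" where
  "D_bound = (\<Sum>i\<in>nodes N. \<Sum>h\<in>hrows E N i. \<bar>Dw d r i h\<bar>)"
definition coerc_const :: "real" where
  "coerc_const = 2 * hop_const + 2"
definition res :: "nat \<Rightarrow> real" where
  "res t = sqrt (Hres t + Ares t)"
definition lam_sq :: "nat \<Rightarrow> real" where
  "lam_sq t = (\<Sum>i\<in>nodes N. \<Sum>a\<in>arows E N i. (norm (lam t i a))\<^sup>2)"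

lemma card_le_sums:
  assumes "i \<in> nodes N"
  shows "real (card (hrows E N i)) \<le> nH" "real (card (arows E N i)) \<le> nA"
    "real (card (slots E N i)) \<le> nS"
    "real (card (slots E N i)) * real (card (slots E N i)) \<le> nS2"
  unfolding nH_def nA_def nS_def nS2_def by (rule member_le_sum, use assms in auto)+

lemma abs_Smat_le_S_bound:
  assumes "i \<in> nodes N"
  shows "\<bar>Smat c E N i s s'\<bar> \<le> S_bound"
proof -
  have "real (card (arows E N i)) + real (card (hrows E N i)) / c \<le> S_bound"
    unfolding S_bound_def by (rule member_le_sum) (use assms c_pos in auto)
  then show ?thesis using abs_Smat_le[OF c_pos, of E N i s s'] by linarith
qed

lemma norm_H_zref_le: "i \<in> nodes N \<Longrightarrow> h \<in> hrows E N i \<Longrightarrow> norm (Hv i (zref i) h) \<le> Href_bound"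
  unfolding Href_bound_def by (rule member_le_double_sum) auto

lemma abs_Dw_le: "i \<in> nodes N \<Longrightarrow> h \<in> hrows E N i \<Longrightarrow> \<bar>Dw d r i h\<bar> \<le> D_bound"
  unfolding D_bound_def by (rule member_le_double_sum) auto

lemma bound_consts_nonneg:
  "0 \<le> nH" "0 \<le> nA" "0 \<le> nS" "0 \<le> nS2" "0 \<le> S_bound" "0 \<le> Href_bound" "0 \<le> D_bound"
  "0 \<le> coerc_const"
  unfolding nH_def nA_def nS_def nS2_def S_bound_def Href_bound_def D_bound_def coerc_const_def
  using hop_const_nonneg c_pos by (auto intro!: sum_nonneg)

lemma Hres_nonneg: "0 \<le> Hres t"
  unfolding Hres_def by (intro sum_nonneg) auto

lemma Ares_nonneg: "0 \<le> Ares t"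
  unfolding Ares_def by (intro sum_nonneg) auto

lemma res_nonneg: "0 \<le> res t"
  unfolding res_def using Hres_nonneg Ares_nonneg by simp

lemma res_power2: "(res t)\<^sup>2 = Hres t + Ares t"
  unfolding res_def using Hres_nonneg Ares_nonneg by simp

lemma lam_sq_nonneg: "0 \<le> lam_sq t"
  unfolding lam_sq_def by (intro sum_nonneg) auto

lemma norm_H_zdev_le_res:
  assumes "i \<in> nodes N" "h \<in> hrows E N i"
  shows "norm (Hv i (zdev t i) h) \<le> res t"
proof -
  have "(norm (Hv i (zdev t i) h))\<^sup>2 \<le> Hres t + Ares t"
    using member_le_double_sum[of "nodes N" "hrows E N" i h "\<lambda>i h. (norm (Hv i (zdev t i) h))\<^sup>2"]
      assms Ares_nonneg[of t]
    unfolding Hres_def by force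
  then show ?thesis unfolding res_def by (simp add: real_le_rsqrt)
qed

lemma norm_A_zdev_le_res:
  assumes "i \<in> nodes N" "a \<in> arows E N i"
  shows "norm (Av i (zdev t i) a) \<le> res t"
proof -
  have "(norm (Av i (zdev t i) a))\<^sup>2 \<le> Hres t + Ares t"
    using member_le_double_sum[of "nodes N" "arows E N" i a "\<lambda>i a. (norm (Av i (zdev t i) a))\<^sup>2"]
      assms Hres_nonneg[of t]
    unfolding Ares_def by force
  then show ?thesis unfolding res_def by (simp add: real_le_rsqrt)
qed

lemma norm_lam_le_sqrt_lam_sq:
  assumes "i \<in> nodes N" "a \<in> arows E N i"
  shows "norm (lam t i a) \<le> sqrt (lam_sq t)"
proof -
  have "(norm (lam t i a))\<^sup>2 \<le> lam_sq t"
    using member_le_double_sum[of "nodes N" "arows E N" i a "\<lambda>i a. (norm (lam t i a))\<^sup>2"] assms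
    unfolding lam_sq_def by force
  then show ?thesis by (simp add: real_le_rsqrt)
qed

lemma norm_zdev_le:
  assumes "1 \<le> t" "i \<in> nodes N" "s \<in> slots E N i"
  shows "norm (zdev t i s) \<le> coerc_const * res t"
proof -
  obtain t' where t: "t = Suc t'" using assms(1) by (cases t) auto
  show ?thesis unfolding coerc_const_def t
    by (rule feas_hom_norm_le[OF feas_hom_zdev res_nonneg norm_H_zdev_le_res norm_A_zdev_le_res assms(2,3)])
qed

lemma norm_Dw_w_le:
  assumes "1 \<le> t" "i \<in> nodes N" "h \<in> hrows E N i"
  shows "norm (Dw d r i h *\<^sub>R w t i h) \<le> D_bound"
proof -
  have "\<bar>Dw d r i h\<bar> * norm (w t i h) \<le> D_bound * 1"
    using abs_Dw_le[OF assms(2,3)] norm_w_le_1[OF assms] by (intro mult_mono) auto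
  then show ?thesis by simp
qed

lemma norm_pert_le:
  assumes "1 \<le> t" "i \<in> nodes N" "h \<in> hrows E N i"
  shows "norm (pert t i h) \<le> D_bound + Href_bound"
  unfolding pert_def using norm_triangle_ineq4 norm_Dw_w_le[OF assms] norm_H_zref_le[OF assms(2,3)]
  by (smt (verit))

lemma lyap_nonneg: "0 \<le> lyap t"
  unfolding lyap_def using c_pos
  by (intro add_nonneg_nonneg mult_nonneg_nonneg sum_nonneg qf_Smat_nonneg) auto

lemma lam_sq_le_lyap: "lam_sq t \<le> c * lyap t"
proof -
  have "0 \<le> c * (c * (\<Sum>i\<in>nodes N. qf (Smat c E N i) (slots E N i) (zdev t i)))"
    using c_pos by (intro mult_nonneg_nonneg sum_nonneg qf_Smat_nonneg) auto
  moreover have "c * lyap t = c * (c * (\<Sum>i\<in>nodes N. qf (Smat c E N i) (slots E N i) (zdev t i))) + lam_sq t"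
    unfolding lyap_def lam_sq_def using c_pos by (simp add: algebra_simps)
  ultimately show ?thesis by linarith
qed

definition pert_bound :: "real" where
  "pert_bound = nH * (D_bound + Href_bound)\<^sup>2"

lemma lyap_step:
  assumes "1 \<le> t"
  shows "lyap (Suc t) \<le> lyap t - min 1 c * (res (Suc t))\<^sup>2 + pert_bound"
proof -
  have "(\<Sum>i\<in>nodes N. \<Sum>h\<in>hrows E N i. (norm (pert t i h))\<^sup>2) \<le> pert_bound"
    unfolding pert_bound_def nH_def
    by (rule double_sum_le_card_mult) (use norm_pert_le[OF assms] in \<open>auto intro!: power_mono\<close>)
  moreover have "min 1 c * (res (Suc t))\<^sup>2 \<le> Hres (Suc t) + c * Ares (Suc t)"
  proof -
    have "min 1 c * Hres (Suc t) \<le> 1 * Hres (Suc t)" "min 1 c * Ares (Suc t) \<le> c * Ares (Suc t)"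
      using Hres_nonneg Ares_nonneg by (intro mult_right_mono; simp)+
    then show ?thesis unfolding res_power2 by (simp add: algebra_simps)
  qed
  ultimately show ?thesis using lyap_descent[of t] by linarith
qed

section \<open>Bounding the multipliers by the residuals\<close>

text \<open>\<open>\<lambda>\<^sup>t = A \<zeta>\<^sup>t\<close> with \<open>\<zeta>\<^sup>t\<close> in the parallel space, since \<open>\<lambda>\<^sup>0 = 0\<close> and \<open>A z\<^sup>k = A z\<^sub>d\<^sub>e\<^sub>v\<^sup>k\<close>.\<close>

definition lam_prim :: "nat \<Rightarrow> nat \<Rightarrow> slot \<Rightarrow> real^'n" where
  "lam_prim t i s = (\<Sum>k<t. c *\<^sub>R zdev (Suc k) i s)"

lemma lam_prim_Suc: "lam_prim (Suc t) = (\<lambda>i s. lam_prim t i s + c *\<^sub>R zdev (Suc t) i s)"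
  by (simp add: lam_prim_def fun_eq_iff)

lemma feas_hom_lam_prim: "feas_hom (lam_prim t)"
proof (induction t)
  case 0
  have "lam_prim 0 = (\<lambda>i s. 0)" by (simp add: lam_prim_def fun_eq_iff)
  then show ?case using feas_hom_zero by simp
next
  case (Suc t) then show ?case
    unfolding lam_prim_Suc by (rule feas_hom_add_scaleR[OF _ feas_hom_zdev])
qed

lemma lam_eq_mv_Amat_lam_prim:
  "i \<in> nodes N \<Longrightarrow> a \<in> arows E N i \<Longrightarrow> lam t i a = Av i (lam_prim t i) a"
proof (induction t)
  case 0 then show ?case using lam_init by (simp add: lam_prim_def mv_def)
next
  case (Suc t)
  have "Av i (lam_prim (Suc t) i) a = Av i (lam_prim t i) a + c *\<^sub>R Av i (zdev (Suc t) i) a"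
    unfolding lam_prim_Suc by (simp add: mv_add mv_scaleR)
  then show ?case using Suc lam_update[OF Suc.prems] mv_Amat_zdev[OF Suc.prems(2)] by simp
qed

definition fit_term :: "nat \<Rightarrow> nat \<Rightarrow> (slot \<Rightarrow> real^'n) \<Rightarrow> real" where
  "fit_term t i v = (\<Sum>h\<in>hrows E N i. (Hv i (z (Suc t) i) h - Dw d r i h *\<^sub>R w t i h) \<bullet> Hv i v h)"

definition prox_term :: "nat \<Rightarrow> nat \<Rightarrow> (slot \<Rightarrow> real^'n) \<Rightarrow> real" where
  "prox_term t i v = c * bform (Smat c E N i) (slots E N i) (\<lambda>s. z (Suc t) i s - z t i s) v"

lemma lam_sq_Suc_eq:
  assumes v: "feas_hom v" and Av: "\<And>i a. i \<in> nodes N \<Longrightarrow> a \<in> arows E N i \<Longrightarrow> Av i (v i) a = lam (Suc t) i a"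
  shows "lam_sq (Suc t) = - (\<Sum>i\<in>nodes N. fit_term t i (v i)) - (\<Sum>i\<in>nodes N. prox_term t i (v i))"
proof -
  have "node_deriv t i (v i) = fit_term t i (v i) + (\<Sum>a\<in>arows E N i. (norm (lam (Suc t) i a))\<^sup>2)
      + prox_term t i (v i)" if i: "i \<in> nodes N" for i
  proof -
    have "(\<Sum>a\<in>arows E N i. lam t i a \<bullet> Av i (v i) a) + c * (\<Sum>a\<in>arows E N i. Av i (z (Suc t) i) a \<bullet> Av i (v i) a)
       = (\<Sum>a\<in>arows E N i. (lam t i a + c *\<^sub>R Av i (z (Suc t) i) a) \<bullet> Av i (v i) a)"
      by (simp add: inner_add_left sum.distrib sum_distrib_left)
    also have "\<dots> = (\<Sum>a\<in>arows E N i. (norm (lam (Suc t) i a))\<^sup>2)"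
      by (rule sum.cong[OF refl]) (simp add: lam_update[OF i, symmetric] Av[OF i] power2_norm_eq_inner)
    finally show ?thesis
      unfolding node_deriv_def fit_term_def prox_term_def
      by (simp add: inner_diff_left sum_subtractf algebra_simps)
  qed
  then have "0 = (\<Sum>i\<in>nodes N. fit_term t i (v i)) + lam_sq (Suc t) + (\<Sum>i\<in>nodes N. prox_term t i (v i))"
    using sum_node_deriv_eq_0[OF v, of t] unfolding lam_sq_def by (simp add: sum.distrib)
  then show ?thesis by linarith
qed

lemma abs_fit_term_le:
  assumes t: "1 \<le> t" and i: "i \<in> nodes N" and v: "\<And>h. h \<in> hrows E N i \<Longrightarrow> norm (Hv i v h) \<le> m"
  shows "\<bar>fit_term t i v\<bar> \<le> real (card (hrows E N i)) * ((res (Suc t) + Href_bound + D_bound) * m)"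
proof -
  have "\<bar>(Hv i (z (Suc t) i) h - Dw d r i h *\<^sub>R w t i h) \<bullet> Hv i v h\<bar>
      \<le> (res (Suc t) + Href_bound + D_bound) * m" if h: "h \<in> hrows E N i" for h
  proof -
    have "Hv i (z (Suc t) i) h = Hv i (zdev (Suc t) i) h + Hv i (zref i) h"
      by (subst z_eq_zdev_add_zref) (rule mv_add)
    then have "norm (Hv i (z (Suc t) i) h - Dw d r i h *\<^sub>R w t i h)
        \<le> norm (Hv i (zdev (Suc t) i) h) + norm (Hv i (zref i) h) + norm (Dw d r i h *\<^sub>R w t i h)"
      using norm_add_diff_le by metis
    also have "\<dots> \<le> res (Suc t) + Href_bound + D_bound"
      using norm_H_zdev_le_res[OF i h, of "Suc t"] norm_H_zref_le[OF i h] norm_Dw_w_le[OF t i h] by linarith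
    finally have "norm (Hv i (z (Suc t) i) h - Dw d r i h *\<^sub>R w t i h) \<le> res (Suc t) + Href_bound + D_bound" .
    moreover have "0 \<le> res (Suc t) + Href_bound + D_bound"
      using res_nonneg bound_consts_nonneg by (simp add: add_nonneg_nonneg)
    ultimately show ?thesis
      using Cauchy_Schwarz_ineq2 v[OF h] norm_ge_zero by (smt (verit) mult_mono)
  qed
  then have "\<bar>fit_term t i v\<bar> \<le> (\<Sum>h\<in>hrows E N i. (res (Suc t) + Href_bound + D_bound) * m)"
    unfolding fit_term_def by (intro order_trans[OF sum_abs] sum_mono)
  then show ?thesis by simp
qed

lemma abs_prox_term_le:
  assumes t: "1 \<le> t" and i: "i \<in> nodes N" and v: "\<And>s. s \<in> slots E N i \<Longrightarrow> norm (v s) \<le> m"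
  shows "\<bar>prox_term t i v\<bar>
    \<le> real (card (slots E N i)) * real (card (slots E N i))
      * (c * S_bound * (coerc_const * (res (Suc t) + res t)) * m)"
proof -
  have "\<bar>bform (Smat c E N i) (slots E N i) (\<lambda>s. z (Suc t) i s - z t i s) v\<bar>
      \<le> real (card (slots E N i)) * real (card (slots E N i)) * S_bound
        * (coerc_const * (res (Suc t) + res t)) * m"
  proof (rule abs_bform_le)
    fix s assume s: "s \<in> slots E N i"
    have "z (Suc t) i s - z t i s = zdev (Suc t) i s - zdev t i s" by (simp add: zdev_def)
    then have "norm (z (Suc t) i s - z t i s) \<le> norm (zdev (Suc t) i s) + norm (zdev t i s)"
      using norm_triangle_ineq4 by metis
    also have "\<dots> \<le> coerc_const * res (Suc t) + coerc_const * res t"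
      using norm_zdev_le[OF _ i s, of "Suc t"] norm_zdev_le[OF t i s] by simp
    finally show "norm (z (Suc t) i s - z t i s) \<le> coerc_const * (res (Suc t) + res t)"
      by (simp add: algebra_simps)
  qed (use v abs_Smat_le_S_bound[OF i] in auto)
  then have "c * \<bar>bform (Smat c E N i) (slots E N i) (\<lambda>s. z (Suc t) i s - z t i s) v\<bar>
      \<le> c * (real (card (slots E N i)) * real (card (slots E N i)) * S_bound
        * (coerc_const * (res (Suc t) + res t)) * m)"
    by (rule mult_left_mono) (use c_pos in simp)
  then show ?thesis unfolding prox_term_def using c_pos by (simp add: abs_mult algebra_simps)
qed

lemma sqrt_lam_sq_le:
  assumes t: "1 \<le> t"
  shows "sqrt (lam_sq (Suc t)) \<le> (2 * hop_const + 1)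
    * (2 * nH * (res (Suc t) + Href_bound + D_bound) + c * nS2 * S_bound * (coerc_const * (res (Suc t) + res t)))"
proof -
  define v where "v = dual_lift (lam_prim (Suc t))"
  define vm where "vm = (2 * hop_const + 1) * sqrt (lam_sq (Suc t))"
  have Av: "Av i (v i) a = lam (Suc t) i a" if "i \<in> nodes N" "a \<in> arows E N i" for i a
    unfolding v_def using mv_Amat_dual_lift[OF that(2)] lam_eq_mv_Amat_lam_prim[OF that] by simp
  have v_le: "norm (v i s) \<le> vm" if "i \<in> nodes N" "s \<in> slots E N i" for i s
    unfolding v_def vm_def
    by (rule norm_dual_lift_le[OF feas_hom_lam_prim _ _ that])
       (use lam_eq_mv_Amat_lam_prim norm_lam_le_sqrt_lam_sq lam_sq_nonneg in auto)
  have Hv_le: "norm (Hv i (v i) h) \<le> 2 * vm" if "i \<in> nodes N" "h \<in> hrows E N i" for i h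
    by (rule norm_mv_Hmat_le[OF v_le[OF that(1)] that(2)])
  have v_feas: "feas_hom v"
    unfolding v_def by (intro feas_hom_dual_lift feas_hom_lam_prim)
  have "lam_sq (Suc t) \<le> (\<Sum>i\<in>nodes N. \<bar>fit_term t i (v i)\<bar>) + (\<Sum>i\<in>nodes N. \<bar>prox_term t i (v i)\<bar>)"
    using lam_sq_Suc_eq[OF v_feas Av]
      abs_ge_minus_self[of "\<Sum>i\<in>nodes N. fit_term t i (v i)"] sum_abs[of "\<lambda>i. fit_term t i (v i)" "nodes N"]
      abs_ge_minus_self[of "\<Sum>i\<in>nodes N. prox_term t i (v i)"] sum_abs[of "\<lambda>i. prox_term t i (v i)" "nodes N"]
    by linarith
  also have "\<dots> \<le> (\<Sum>i\<in>nodes N. real (card (hrows E N i)) * ((res (Suc t) + Href_bound + D_bound) * (2 * vm)))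
      + (\<Sum>i\<in>nodes N. real (card (slots E N i)) * real (card (slots E N i))
           * (c * S_bound * (coerc_const * (res (Suc t) + res t)) * vm))"
    using abs_fit_term_le[OF t _ Hv_le] abs_prox_term_le[OF t _ v_le] by (intro add_mono sum_mono) auto
  also have "\<dots> = nH * ((res (Suc t) + Href_bound + D_bound) * (2 * vm))
      + nS2 * (c * S_bound * (coerc_const * (res (Suc t) + res t)) * vm)"
    unfolding nH_def nS2_def by (simp only: sum_distrib_right)
  also have "\<dots> = (2 * hop_const + 1) * (2 * nH * (res (Suc t) + Href_bound + D_bound)
      + c * nS2 * S_bound * (coerc_const * (res (Suc t) + res t))) * sqrt (lam_sq (Suc t))"
    unfolding vm_def by (simp add: algebra_simps)
  finally show ?thesis
    using hop_const_nonneg bound_consts_nonneg res_nonneg c_pos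
    by (intro sqrt_le_if_le_mult_sqrt lam_sq_nonneg) (auto intro!: mult_nonneg_nonneg add_nonneg_nonneg)
qed

lemma sum_qf_Smat_zdev_le:
  assumes t: "1 \<le> t"
  shows "(\<Sum>i\<in>nodes N. qf (Smat c E N i) (slots E N i) (zdev t i))
    \<le> nS2 * S_bound * coerc_const\<^sup>2 * (res t)\<^sup>2"
proof -
  have "qf (Smat c E N i) (slots E N i) (zdev t i)
      \<le> real (card (slots E N i)) * real (card (slots E N i)) * (S_bound * coerc_const\<^sup>2 * (res t)\<^sup>2)"
    if i: "i \<in> nodes N" for i
  proof -
    have "qf (Smat c E N i) (slots E N i) (zdev t i) \<le> \<bar>bform (Smat c E N i) (slots E N i) (zdev t i) (zdev t i)\<bar>"
      unfolding qf_eq_bform by simp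
    also have "\<dots> \<le> real (card (slots E N i)) * real (card (slots E N i)) * S_bound
        * (coerc_const * res t) * (coerc_const * res t)"
      by (rule abs_bform_le) (use norm_zdev_le[OF t i] abs_Smat_le_S_bound[OF i] in auto)
    finally show ?thesis by (simp add: power2_eq_square algebra_simps)
  qed
  then have "(\<Sum>i\<in>nodes N. qf (Smat c E N i) (slots E N i) (zdev t i))
      \<le> (\<Sum>i\<in>nodes N. real (card (slots E N i)) * real (card (slots E N i)) * (S_bound * coerc_const\<^sup>2 * (res t)\<^sup>2))"
    by (rule sum_mono)
  also have "\<dots> = nS2 * S_bound * coerc_const\<^sup>2 * (res t)\<^sup>2"
    unfolding nS2_def sum_distrib_right by (simp add: mult.assoc)
  finally show ?thesis .
qed

lemma lam_sq_Suc_le_res: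
  obtains B where "0 \<le> B" "\<And>t. 1 \<le> t \<Longrightarrow> lam_sq (Suc t) \<le> B * ((res (Suc t))\<^sup>2 + (res t)\<^sup>2 + 1)"
proof
  define b1 where "b1 = (2 * hop_const + 1) * (2 * nH + c * nS2 * S_bound * coerc_const)"
  define b2 where "b2 = (2 * hop_const + 1) * (c * nS2 * S_bound * coerc_const)"
  define b3 where "b3 = (2 * hop_const + 1) * (2 * nH * (Href_bound + D_bound))"
  have b_nonneg: "0 \<le> b1" "0 \<le> b2" "0 \<le> b3" unfolding b1_def b2_def b3_def
    using hop_const_nonneg bound_consts_nonneg c_pos by (auto intro!: mult_nonneg_nonneg add_nonneg_nonneg)
  show "0 \<le> 3 * (b1\<^sup>2 + b2\<^sup>2 + b3\<^sup>2)" by simp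
  fix t :: nat assume t: "1 \<le> t"
  have "sqrt (lam_sq (Suc t)) \<le> b1 * res (Suc t) + b2 * res t + b3"
    using sqrt_lam_sq_le[OF t] unfolding b1_def b2_def b3_def by (simp add: algebra_simps)
  then have "(sqrt (lam_sq (Suc t)))\<^sup>2 \<le> (b1 * res (Suc t) + b2 * res t + b3)\<^sup>2"
    by (rule power_mono) (use lam_sq_nonneg in simp)
  then have "lam_sq (Suc t) \<le> (b1 * res (Suc t) + b2 * res t + b3)\<^sup>2"
    using lam_sq_nonneg[of "Suc t"] by simp
  also have "\<dots> \<le> 3 * ((b1 * res (Suc t))\<^sup>2 + (b2 * res t)\<^sup>2 + b3\<^sup>2)"
    by (rule power2_sum3_le)
  also have "\<dots> \<le> 3 * (b1\<^sup>2 + b2\<^sup>2 + b3\<^sup>2) * ((res (Suc t))\<^sup>2 + (res t)\<^sup>2 + 1)"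
    using b_nonneg by (simp add: power_mult_distrib algebra_simps add_nonneg_nonneg mult_nonneg_nonneg)
  finally show "lam_sq (Suc t) \<le> 3 * (b1\<^sup>2 + b2\<^sup>2 + b3\<^sup>2) * ((res (Suc t))\<^sup>2 + (res t)\<^sup>2 + 1)" .
qed

lemma lyap_le_res:
  obtains P where "0 < P" "\<And>t. 1 \<le> t \<Longrightarrow> lyap (Suc t) \<le> P * ((res (Suc t))\<^sup>2 + (res t)\<^sup>2 + 1)"
proof -
  obtain B where B: "0 \<le> B" "\<And>t. 1 \<le> t \<Longrightarrow> lam_sq (Suc t) \<le> B * ((res (Suc t))\<^sup>2 + (res t)\<^sup>2 + 1)"
    using lam_sq_Suc_le_res by blast
  define X where "X = nS2 * S_bound * coerc_const\<^sup>2"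
  have X: "0 \<le> X" unfolding X_def using bound_consts_nonneg by simp
  show ?thesis
  proof (rule that)
    show "0 < c * X + B / c + 1" using c_pos X B(1) by (simp add: add_nonneg_pos)
    fix t :: nat assume t: "1 \<le> t"
    define R where "R = (res (Suc t))\<^sup>2 + (res t)\<^sup>2 + 1"
    have R: "(res (Suc t))\<^sup>2 \<le> R" "0 \<le> R" unfolding R_def by auto
    have "lyap (Suc t) \<le> c * (X * (res (Suc t))\<^sup>2) + (1/c) * (B * R)"
      unfolding lyap_def lam_sq_def[symmetric] X_def R_def
      using sum_qf_Smat_zdev_le[of "Suc t"] B(2)[OF t] c_pos by (intro add_mono mult_left_mono) auto
    also have "\<dots> \<le> c * (X * R) + (1/c) * (B * R)"
      using R X B(1) c_pos by (intro add_mono mult_left_mono) auto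
    also have "\<dots> \<le> (c * X + B / c + 1) * R" using R by (simp add: algebra_simps)
    finally show "lyap (Suc t) \<le> (c * X + B / c + 1) * ((res (Suc t))\<^sup>2 + (res t)\<^sup>2 + 1)"
      unfolding R_def .
  qed
qed

section \<open>Boundedness of the iterates\<close>

text \<open>Two descent steps, with the upper bound of \<open>lyap\<close> in terms of the residuals used in the
  middle, make \<open>lyap\<close> contract up to a constant every other step.\<close>

lemma lyap_two_step:
  assumes P: "0 < P" "\<And>t. 1 \<le> t \<Longrightarrow> lyap (Suc t) \<le> P * ((res (Suc t))\<^sup>2 + (res t)\<^sup>2 + 1)"
    and t: "1 \<le> t"
  shows "lyap (Suc (Suc t)) * (1 + min 1 c / P) \<le> lyap t + (min 1 c + 2 * pert_bound)"
proof -
  have "lyap (Suc (Suc t)) / P \<le> (res (Suc (Suc t)))\<^sup>2 + (res (Suc t))\<^sup>2 + 1"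
    using P t by (simp add: pos_divide_le_eq mult.commute)
  then have "min 1 c * (lyap (Suc (Suc t)) / P)
      \<le> min 1 c * ((res (Suc (Suc t)))\<^sup>2 + (res (Suc t))\<^sup>2 + 1)"
    by (rule mult_left_mono) (use c_pos in simp)
  moreover have "lyap (Suc (Suc t)) * (1 + min 1 c / P) = lyap (Suc (Suc t)) + min 1 c * (lyap (Suc (Suc t)) / P)"
    by (simp add: algebra_simps)
  ultimately show ?thesis using lyap_step[OF t] lyap_step[of "Suc t"] t by (simp add: algebra_simps)
qed

lemma lyap_bounded: obtains M where "\<And>t. 1 \<le> t \<Longrightarrow> lyap t \<le> M"
proof -
  obtain P where P: "0 < P" "\<And>t. 1 \<le> t \<Longrightarrow> lyap (Suc t) \<le> P * ((res (Suc t))\<^sup>2 + (res t)\<^sup>2 + 1)"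
    using lyap_le_res by blast
  define q where "q = min 1 c / P"
  define K where "K = min 1 c + 2 * pert_bound"
  define M where "M = max (lyap 1) (max (lyap 2) (K / q))"
  have q: "0 < q" unfolding q_def using P(1) c_pos by simp
  have "K / q \<le> M" unfolding M_def by simp
  then have KM: "K \<le> M * q" using q by (simp add: pos_divide_le_eq)
  have bound: "lyap (Suc t) \<le> M \<and> lyap (Suc (Suc t)) \<le> M" for t
  proof (induction t)
    case 0 show ?case unfolding M_def by (simp add: numeral_2_eq_2)
  next
    case (Suc t)
    have "lyap (Suc (Suc (Suc t))) * (1 + q) \<le> lyap (Suc t) + K"
      unfolding q_def K_def by (intro lyap_two_step[OF P]) auto
    also have "\<dots> \<le> M * (1 + q)" using Suc KM by (simp add: algebra_simps)
    finally have "lyap (Suc (Suc (Suc t))) \<le> M" using q by simp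
    then show ?case using Suc by simp
  qed
  show ?thesis
  proof (rule that)
    fix t :: nat assume "1 \<le> t"
    then obtain t' where "t = Suc t'" by (cases t) auto
    then show "lyap t \<le> M" using bound[of t'] by simp
  qed
qed

lemma lam_bounded:
  obtains Lb where "0 \<le> Lb"
    "\<And>t i a. 1 \<le> t \<Longrightarrow> i \<in> nodes N \<Longrightarrow> a \<in> arows E N i \<Longrightarrow> norm (lam t i a) \<le> Lb"
proof -
  obtain M where M: "\<And>t. 1 \<le> t \<Longrightarrow> lyap t \<le> M" using lyap_bounded by blast
  have "0 \<le> c * M" using M[of 1] lyap_nonneg[of 1] c_pos by simp
  moreover have "norm (lam t i a) \<le> sqrt (c * M)"
    if "1 \<le> t" "i \<in> nodes N" "a \<in> arows E N i" for t i a
  proof -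
    have "c * lyap t \<le> c * M" using M[OF that(1)] c_pos by (intro mult_left_mono) auto
    then have "sqrt (lam_sq t) \<le> sqrt (c * M)" using lam_sq_le_lyap[of t] by simp
    then show ?thesis using norm_lam_le_sqrt_lam_sq[OF that(2,3), of t] by linarith
  qed
  ultimately show ?thesis by (intro that[of "sqrt (c * M)"]) auto
qed

lemma res_bounded: obtains Rb where "\<And>t. 1 \<le> t \<Longrightarrow> res t \<le> Rb"
proof -
  obtain M where M: "\<And>t. 1 \<le> t \<Longrightarrow> lyap t \<le> M" using lyap_bounded by blast
  have "res t \<le> max (res 1) (sqrt ((M + pert_bound) / min 1 c))" if t: "1 \<le> t" for t
  proof (cases "t = 1")
    case False
    then obtain t' where t': "t = Suc t'" "1 \<le> t'" using t by (cases t) auto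
    have "min 1 c * (res t)\<^sup>2 \<le> M + pert_bound"
      using lyap_step[OF t'(2)] M[OF t'(2)] lyap_nonneg[of t] unfolding t'(1) by linarith
    then have "(res t)\<^sup>2 \<le> (M + pert_bound) / min 1 c"
      using c_pos by (simp add: pos_le_divide_eq mult.commute)
    then have "res t \<le> sqrt ((M + pert_bound) / min 1 c)" by (rule real_le_rsqrt)
    then show ?thesis by simp
  qed simp
  then show ?thesis using that by blast
qed

lemma z_bounded:
  obtains Zb where "0 \<le> Zb"
    "\<And>t i s. 1 \<le> t \<Longrightarrow> i \<in> nodes N \<Longrightarrow> s \<in> slots E N i \<Longrightarrow> norm (z t i s) \<le> Zb"
proof -
  obtain Rb where Rb: "\<And>t. 1 \<le> t \<Longrightarrow> res t \<le> Rb" using res_bounded by blast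
  define Zb where "Zb = coerc_const * Rb + (\<Sum>k\<in>nodes N. norm (anchor_pos k))"
  have "norm (z t i s) \<le> Zb" if t: "1 \<le> t" and i: "i \<in> nodes N" and s: "s \<in> slots E N i" for t i s
  proof -
    have "norm (z t i s) \<le> norm (zdev t i s) + norm (zref i s)"
      unfolding zdev_def using norm_triangle_ineq[of "z t i s - zref i s" "zref i s"] by simp
    also have "\<dots> \<le> coerc_const * res t + (\<Sum>k\<in>nodes N. norm (anchor_pos k))"
      using norm_zdev_le[OF t i s] norm_zref_le[OF i s] by (rule add_mono)
    also have "\<dots> \<le> Zb"
      unfolding Zb_def using Rb[OF t] bound_consts_nonneg by (simp add: mult_left_mono)
    finally show ?thesis .
  qed
  moreover have "0 \<le> Zb"
    using Rb[of 1] res_nonneg[of 1] bound_consts_nonneg unfolding Zb_def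
    by (intro add_nonneg_nonneg mult_nonneg_nonneg sum_nonneg) auto
  ultimately show ?thesis using that by blast
qed

text \<open>\<open>U\<^sub>i\<close> is diagonal with entries at least \<open>2 min 1 c\<close>, so the defining equation of \<open>z\<^sup>~\<^sup>t\<^sup>+\<^sup>1\<close>
  bounds it by the right-hand side.\<close>

lemma norm_ztil_Suc_le:
  assumes t: "1 \<le> t" and i: "i \<in> nodes N" and s: "s \<in> slots E N i"
    and lam: "\<And>a. a \<in> arows E N i \<Longrightarrow> norm (lam t i a) \<le> Lb"
    and z: "\<And>s. s \<in> slots E N i \<Longrightarrow> norm (z t i s) \<le> Zb" and "0 \<le> Lb" "0 \<le> Zb"
  shows "2 * min 1 c * norm (ztil (Suc t) i s) \<le> nH * D_bound + nA * Lb + c * (nS * (S_bound * Zb))"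
proof -
  have "norm (mtv Hmat (hrows E N i) (\<lambda>h. Dw d r i h *\<^sub>R w t i h) s) \<le> real (card (hrows E N i)) * D_bound"
    using norm_Dw_w_le[OF t i] by (intro norm_mtv_le) (auto intro: abs_Hmat_le_1)
  also have "\<dots> \<le> nH * D_bound"
    using card_le_sums(1)[OF i] bound_consts_nonneg by (intro mult_right_mono) auto
  finally have H: "norm (mtv Hmat (hrows E N i) (\<lambda>h. Dw d r i h *\<^sub>R w t i h) s) \<le> nH * D_bound" .
  have "norm (mtv Amat (arows E N i) (lam t i) s) \<le> real (card (arows E N i)) * Lb"
    using lam by (intro norm_mtv_le) (auto intro: abs_Amat_le_1)
  also have "\<dots> \<le> nA * Lb"
    using card_le_sums(2)[OF i] \<open>0 \<le> Lb\<close> by (intro mult_right_mono) auto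
  finally have A: "norm (mtv Amat (arows E N i) (lam t i) s) \<le> nA * Lb" .
  have "norm (mapply (Smat c E N i) (slots E N i) (z t i) s) \<le> real (card (slots E N i)) * (S_bound * Zb)"
    using abs_Smat_le_S_bound[OF i] z \<open>0 \<le> Zb\<close> by (intro norm_mapply_le) auto
  also have "\<dots> \<le> nS * (S_bound * Zb)"
    using card_le_sums(3)[OF i] bound_consts_nonneg \<open>0 \<le> Zb\<close> by (intro mult_right_mono) auto
  finally have S: "norm (c *\<^sub>R mapply (Smat c E N i) (slots E N i) (z t i) s) \<le> c * (nS * (S_bound * Zb))"
    using c_pos by (simp add: mult_left_mono)
  have U: "2 * min 1 c \<le> Umat c E N i s s" by (rule Umat_diag_ge[OF c_pos s])
  have "mapply (Umat c E N i) (slots E N i) (ztil (Suc t) i) s = Umat c E N i s s *\<^sub>R ztil (Suc t) i s"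
    by (rule mapply_diag) (use s Umat_offdiag[OF c_pos] in auto)
  then have "Umat c E N i s s *\<^sub>R ztil (Suc t) i s
      = mtv Hmat (hrows E N i) (\<lambda>h. Dw d r i h *\<^sub>R w t i h) s - mtv Amat (arows E N i) (lam t i) s
        + c *\<^sub>R mapply (Smat c E N i) (slots E N i) (z t i) s"
    using ztil_equation[OF i s, of t] by simp
  then have "norm (Umat c E N i s s *\<^sub>R ztil (Suc t) i s)
      \<le> nH * D_bound + nA * Lb + c * (nS * (S_bound * Zb))"
    using norm_diff_add_le H A S by (smt (verit))
  moreover have "2 * min 1 c * norm (ztil (Suc t) i s) \<le> norm (Umat c E N i s s *\<^sub>R ztil (Suc t) i s)"
    using U c_pos by (simp add: mult_right_mono)
  ultimately show ?thesis by linarith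
qed

lemma sequences_bounded:
  "bounded_seq N (slots E N) z \<and> bounded_seq N (hrows E N) w
    \<and> bounded_seq N (arows E N) lam \<and> bounded_seq N (slots E N) ztil"
proof (intro conjI)
  obtain Lb where Lb: "0 \<le> Lb"
    "\<And>t i a. 1 \<le> t \<Longrightarrow> i \<in> nodes N \<Longrightarrow> a \<in> arows E N i \<Longrightarrow> norm (lam t i a) \<le> Lb"
    using lam_bounded by blast
  obtain Zb where Zb: "0 \<le> Zb"
    "\<And>t i s. 1 \<le> t \<Longrightarrow> i \<in> nodes N \<Longrightarrow> s \<in> slots E N i \<Longrightarrow> norm (z t i s) \<le> Zb"
    using z_bounded by blast
  show "bounded_seq N (slots E N) z" "bounded_seq N (arows E N) lam"
    unfolding bounded_seq_def using Zb(2) Lb(2) by blast+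
  show "bounded_seq N (hrows E N) w"
    unfolding bounded_seq_def using norm_w_le_1 by blast
  define B where "B = (nH * D_bound + nA * Lb + c * (nS * (S_bound * Zb))) / (2 * min 1 c)"
  define B1 where "B1 = (\<Sum>i\<in>nodes N. \<Sum>s\<in>slots E N i. norm (ztil 1 i s))"
  have "norm (ztil t i s) \<le> max B B1" if t: "1 \<le> t" and i: "i \<in> nodes N" and s: "s \<in> slots E N i" for t i s
  proof (cases "t = 1")
    case True
    then show ?thesis unfolding B1_def using member_le_double_sum[of "nodes N" "slots E N" i s
        "\<lambda>i s. norm (ztil 1 i s)"] i s by simp
  next
    case False
    then obtain t' where t': "t = Suc t'" "1 \<le> t'" using t by (cases t) auto
    have "2 * min 1 c * norm (ztil t i s) \<le> nH * D_bound + nA * Lb + c * (nS * (S_bound * Zb))"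
      unfolding t'(1) using Lb Zb t'(2) i s by (intro norm_ztil_Suc_le) auto
    then have "norm (ztil t i s) \<le> B"
      unfolding B_def using c_pos by (simp add: pos_le_divide_eq mult.commute)
    then show ?thesis by simp
  qed
  then show "bounded_seq N (slots E N) ztil" unfolding bounded_seq_def by blast
qed

end

theorem lemmaA8p2:
  fixes E :: "nat \<Rightarrow> nat \<Rightarrow> bool" and N :: nat and anc :: "nat set"
    and apos :: "nat \<Rightarrow> real^'n" and d :: "nat \<Rightarrow> nat \<Rightarrow> real" and r :: "nat \<Rightarrow> real"
    and c \<rho> :: real
    and z :: "nat \<Rightarrow> nat \<Rightarrow> slot \<Rightarrow> real^'n" and w :: "nat \<Rightarrow> nat \<Rightarrow> hrow \<Rightarrow> real^'n"
    and lam :: "nat \<Rightarrow> nat \<Rightarrow> arow \<Rightarrow> real^'n" and ztil :: "nat \<Rightarrow> nat \<Rightarrow> slot \<Rightarrow> real^'n"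
  assumes E_nodes: "\<And>i j. E i j \<Longrightarrow> i \<in> nodes N \<and> j \<in> nodes N"
    and E_sym: "\<And>i j. E i j \<Longrightarrow> E j i"
    and E_irrefl: "\<And>i. \<not> E i i"
    and deg_pos: "\<And>i. i \<in> nodes N \<Longrightarrow> deg E N i \<ge> 1"
    and connected: "\<And>i j. i \<in> nodes N \<Longrightarrow> j \<in> nodes N \<Longrightarrow> E\<^sup>*\<^sup>* i j"
    and anc_sub: "anc \<subseteq> nodes N" and anc_ne: "anc \<noteq> {}"
    and d_sym: "\<And>i j. E i j \<Longrightarrow> d i j = d j i"
    and d_nonneg: "\<And>i j. E i j \<Longrightarrow> d i j \<ge> 0"
    and r_nonneg: "\<And>i. i \<in> nodes N \<Longrightarrow> r i \<ge> 0"
    and c_pos: "c > 0" and rho_pos: "\<rho> > 0"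
    and cond: "param_cond c \<rho> CARD('n) E N d r"
    and alg: "sp_admm_jcnl c \<rho> E N anc apos d r z w lam ztil"
  shows "bounded_seq N (slots E N) z \<and> bounded_seq N (hrows E N) w
       \<and> bounded_seq N (arows E N) lam \<and> bounded_seq N (slots E N) ztil"
proof -
  interpret sp_admm_run E N anc apos d r c \<rho> z w lam ztil
    using E_nodes E_sym connected anc_sub anc_ne c_pos alg by unfold_locales
  show ?thesis by (rule sequences_bounded)
qed

end
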